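(* Let $\mathcal{C}$ be a d-category and $\mathrm{Rat}(\mathcal{C})$ the class of rational $\mathcal{C}$-languages. Then $(\mathrm{Rat}(\mathcal{C}),+,\emptyset,*,(-)^+)$ is a non-unital Kleene algebra: $\mathrm{Rat}(\mathcal{C})$ contains $\emptyset$ and is closed under $+$, $*$ and $(-)^+$; $+$ is associative, commutative, idempotent with unit $\emptyset$; $*$ is associative, distributes over $+$ on both sides, and $\emptyset$ is absorbing for $*$; and for all $L,M\in\mathrm{Rat}(\mathcal{C})$: $L+L^+*L^+\subseteq L^+$, and $L+M*M\subseteq M$ implies $L^+\subseteq M$.
   Context: A d-category is a small category $\mathcal{C}$ with wide subcategories $\mathcal{C}^+$ (formorphisms) and $\mathcal{C}^-$ (backmorphisms) such that an invertible $\varphi$ is in $\mathcal{C}^+$ iff $\varphi^{-1}\in\mathcal{C}^-$. A $\mathcal{C}$-automaton is a presheaf $X:\mathcal{C}^{op}\to\mathbf{Set}$ with sets of start and accept elements; morphisms preserve them. Simple automata have exactly one start and one accept element, lying over $\mathrm{src}(X),\mathrm{tgt}(X)$; for simple $X,Y$ with $\mathrm{tgt}X=\mathrm{src}Y=U$, $X*Y$ is the pushout of $X\leftarrow\mathcal{C}(-,U)\to Y$ (along accept of $X$, start of $Y$) with start from $X$ and accept from $Y$. A linear category is a bipointed d-category isomorphic to a finite (possibly empty) concatenation (gluing $\top$ to $\bot$) of $\mathbf S$ (formorphism $\bot\to\top$), $\mathbf T$ (backmorphism $\top\to\bot$), $\mathbf I$ (inverse pair); a path is a d-functor $\omega:\mathcal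 I\to\mathcal{C}$ from one; its track object is $\operatorname{colim}_i\mathcal{C}(-,\omega(i))$ with start element image of $\mathrm{id}_{\omega(\bot)}$, accept element image of $\mathrm{id}_{\omega(\top)}$; track objects are automata isomorphic to such. $\Delta\sqsubseteq\Gamma$ if there is an automaton morphism $\Delta\to\Gamma$. A $\mathcal{C}$-language is a class of track objects down-closed under $\sqsubseteq$; $A{\downarrow}$ is down-closure. $\iota_U$: $\mathcal{C}(-,U)$ with start and accept $\mathrm{id}_U$; $1_{\mathcal{C}}=\{\iota_U\}{\downarrow}$. Operations: $L+M=L\cup M$; $L*M=\{\Gamma*\Delta\mid\Gamma\in L,\Delta\in M,\mathrm{tgt}\Gamma=\mathrm{src}\Delta\}{\downarrow}$; $L^0=1_{\mathcal{C}}$, $L^{k+1}=L*L^k$, $L^+=\bigcup_{n\ge1}L^n$. Atomic languages are $\{\Gamma\}{\downarrow}$ for a track object $\Gamma$; $\mathrm{Rat}(\mathcal{C})$ is the smallest class of languages containing $\emptyset$ and all atomic languages and closed under $+$, $*$, $(-)^+$. *)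

theory Defs
  imports Main
begin

record ('o,'m) dcat =
  Ob :: "'o set"
  Mor :: "'m set"
  Dom :: "'m \<Rightarrow> 'o"
  Cod :: "'m \<Rightarrow> 'o"
  Idm :: "'o \<Rightarrow> 'm"
  Comp :: "'m \<Rightarrow> 'm \<Rightarrow> 'm"   (* Comp g f = g \<circ> f, defined when Cod f = Dom g *)
  Plus :: "'m set"
  Minus :: "'m set"

definition is_category :: "('o,'m,'x) dcat_scheme \<Rightarrow> bool" where
  "is_category C \<longleftrightarrow>
     (\<forall>f\<in>Mor C. Dom C f \<in> Ob C \<and> Cod C f \<in> Ob C)
   \<and> (\<forall>U\<in>Ob C. Idm C U \<in> Mor C \<and> Dom C (Idm C U) = U \<and> Cod C (Idm C U) = U)
   \<and> (\<forall>f\<in>Mor C. \<forall>g\<in>Mor C. Cod C f = Dom C g \<longrightarrow>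
        Comp C g f \<in> Mor C \<and> Dom C (Comp C g f) = Dom C f \<and> Cod C (Comp C g f) = Cod C g)
   \<and> (\<forall>f\<in>Mor C. Comp C f (Idm C (Dom C f)) = f \<and> Comp C (Idm C (Cod C f)) f = f)
   \<and> (\<forall>f\<in>Mor C. \<forall>g\<in>Mor C. \<forall>h\<in>Mor C. Cod C f = Dom C g \<longrightarrow> Cod C g = Dom C h \<longrightarrow>
        Comp C h (Comp C g f) = Comp C (Comp C h g) f)"

definition inverse_pair :: "('o,'m,'x) dcat_scheme \<Rightarrow> 'm \<Rightarrow> 'm \<Rightarrow> bool" where
  "inverse_pair C f g \<longleftrightarrow> f \<in> Mor C \<and> g \<in> Mor C \<and> Dom C g = Cod C f \<and> Cod C g = Dom C f
     \<and> Comp C g f = Idm C (Dom C f) \<and> Comp C f g = Idm C (Cod C f)"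

definition wide_subcat :: "('o,'m,'x) dcat_scheme \<Rightarrow> 'm set \<Rightarrow> bool" where
  "wide_subcat C S \<longleftrightarrow> S \<subseteq> Mor C \<and> (\<forall>U\<in>Ob C. Idm C U \<in> S)
     \<and> (\<forall>f\<in>S. \<forall>g\<in>S. Cod C f = Dom C g \<longrightarrow> Comp C g f \<in> S)"

definition is_dcat :: "('o,'m,'x) dcat_scheme \<Rightarrow> bool" where
  "is_dcat C \<longleftrightarrow> is_category C \<and> wide_subcat C (Plus C) \<and> wide_subcat C (Minus C)
     \<and> (\<forall>f g. inverse_pair C f g \<longrightarrow> (f \<in> Plus C \<longleftrightarrow> g \<in> Minus C))"

section \<open>Automata (presheaves with start and accept elements)\<close>

text \<open>A presheaf is given by its set of elements, the object each element lies over,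
  and the restriction action: for x over U and f : V -> U, Act x f is the element x.f over V.\<close>

record ('o,'m,'e) autom =
  Elts :: "'e set"
  Over :: "'e \<Rightarrow> 'o"
  Act :: "'e \<Rightarrow> 'm \<Rightarrow> 'e"
  Start :: "'e set"
  Acc :: "'e set"

definition is_autom :: "('o,'m,'x) dcat_scheme \<Rightarrow> ('o,'m,'e) autom \<Rightarrow> bool" where
  "is_autom C X \<longleftrightarrow>
     (\<forall>x\<in>Elts X. Over X x \<in> Ob C)
   \<and> (\<forall>x\<in>Elts X. \<forall>f\<in>Mor C. Cod C f = Over X x \<longrightarrow>
        Act X x f \<in> Elts X \<and> Over X (Act X x f) = Dom C f)
   \<and> (\<forall>x\<in>Elts X. Act X x (Idm C (Over X x)) = x)
   \<and> (\<forall>x\<in>Elts X. \<forall>f\<in>Mor C. \<forall>g\<in>Mor C. Cod C f = Over X x \<longrightarrow> Cod C g = Dom C f \<longrightarrow>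
        Act X (Act X x f) g = Act X x (Comp C f g))
   \<and> Start X \<subseteq> Elts X \<and> Acc X \<subseteq> Elts X"

definition amor :: "('o,'m,'x) dcat_scheme \<Rightarrow> ('o,'m,'e) autom \<Rightarrow> ('o,'m,'f) autom
    \<Rightarrow> ('e \<Rightarrow> 'f) \<Rightarrow> bool" where
  "amor C X Y h \<longleftrightarrow>
     (\<forall>x\<in>Elts X. h x \<in> Elts Y \<and> Over Y (h x) = Over X x)
   \<and> (\<forall>x\<in>Elts X. \<forall>f\<in>Mor C. Cod C f = Over X x \<longrightarrow> h (Act X x f) = Act Y (h x) f)
   \<and> h ` Start X \<subseteq> Start Y \<and> h ` Acc X \<subseteq> Acc Y"

definition aiso :: "('o,'m,'x) dcat_scheme \<Rightarrow> ('o,'m,'e) autom \<Rightarrow> ('o,'m,'f) autom \<Rightarrow> bool" where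
  "aiso C X Y \<longleftrightarrow> (\<exists>h k. amor C X Y h \<and> amor C Y X k
      \<and> (\<forall>x\<in>Elts X. k (h x) = x) \<and> (\<forall>y\<in>Elts Y. h (k y) = y))"

definition aleq :: "('o,'m,'x) dcat_scheme \<Rightarrow> ('o,'m,'e) autom \<Rightarrow> ('o,'m,'f) autom \<Rightarrow> bool" where
  "aleq C D G \<longleftrightarrow> (\<exists>h. amor C D G h)"

definition src :: "('o,'m,'e) autom \<Rightarrow> 'o" where
  "src X = Over X (the_elem (Start X))"

definition tgt :: "('o,'m,'e) autom \<Rightarrow> 'o" where
  "tgt X = Over X (the_elem (Acc X))"

section \<open>Gluing X * Y (pushout of X <- C(-,U) -> Y)\<close>

definition glue_rel :: "('o,'m,'x) dcat_scheme \<Rightarrow> ('o,'m,'e) autom \<Rightarrow> ('o,'m,'e) autom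
    \<Rightarrow> ('e + 'e) rel" where
  "glue_rel C X Y =
     (let D = Inl ` Elts X \<union> Inr ` Elts Y;
          R = {(Inl (Act X (the_elem (Acc X)) f), Inr (Act Y (the_elem (Start Y)) f)) | f.
                 f \<in> Mor C \<and> Cod C f = tgt X}
      in (R \<union> R\<inverse>)\<^sup>* \<inter> (D \<times> D))"

definition glue :: "('o,'m,'x) dcat_scheme \<Rightarrow> ('o,'m,'e) autom \<Rightarrow> ('o,'m,'e) autom
    \<Rightarrow> ('o,'m,('e + 'e) set) autom" where
  "glue C X Y =
     (let E = glue_rel C X Y;
          ov = case_sum (Over X) (Over Y);
          ac = (\<lambda>z f. case z of Inl x \<Rightarrow> Inl (Act X x f) | Inr y \<Rightarrow> Inr (Act Y y f))
      in \<lparr> Elts = (Inl ` Elts X \<union> Inr ` Elts Y) // E,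
           Over = (\<lambda>c. ov (SOME z. z \<in> c)),
           Act = (\<lambda>c f. E `` {ac (SOME z. z \<in> c) f}),
           Start = (\<lambda>x. E `` {Inl x}) ` Start X,
           Acc = (\<lambda>y. E `` {Inr y}) ` Acc Y \<rparr>)"

text \<open>A linear category is a finite concatenation of the generators S (formorphism bot -> top),
  T (backmorphism top -> bot) and I (inverse pair, bot -> top a formorphism, its inverse a
  backmorphism). It is encoded by the word of generators; its objects are 0..n (n = length).
  A path (d-functor) is determined by the images of the objects and of the generating morphisms.\<close>

datatype lgen = S | T | I

type_synonym ('o,'m) path = "lgen list \<times> (nat \<Rightarrow> 'o) \<times> (nat \<Rightarrow> 'm)"

definition is_path :: "('o,'m,'x) dcat_scheme \<Rightarrow> ('o,'m) path \<Rightarrow> bool" where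
  "is_path C p \<longleftrightarrow> (case p of (w, ob, mo) \<Rightarrow>
     (\<forall>i\<le>length w. ob i \<in> Ob C)
   \<and> (\<forall>k<length w.
        (w!k = S \<longrightarrow> mo k \<in> Plus C \<and> Dom C (mo k) = ob k \<and> Cod C (mo k) = ob (Suc k))
      \<and> (w!k = T \<longrightarrow> mo k \<in> Minus C \<and> Dom C (mo k) = ob (Suc k) \<and> Cod C (mo k) = ob k)
      \<and> (w!k = I \<longrightarrow> mo k \<in> Plus C \<and> Dom C (mo k) = ob k \<and> Cod C (mo k) = ob (Suc k)
                    \<and> (\<exists>g. inverse_pair C (mo k) g \<and> g \<in> Minus C))))"

type_synonym 'm trk = "(nat \<times> 'm) set"

definition track_rel :: "('o,'m,'x) dcat_scheme \<Rightarrow> ('o,'m) path \<Rightarrow> (nat \<times> 'm) rel" where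
  "track_rel C p = (case p of (w, ob, mo) \<Rightarrow>
     (let D = {(i, g). i \<le> length w \<and> g \<in> Mor C \<and> Cod C g = ob i};
          R = {((k, g), (Suc k, Comp C (mo k) g)) | k g.
                  k < length w \<and> w!k \<in> {S, I} \<and> g \<in> Mor C \<and> Cod C g = ob k}
            \<union> {((Suc k, g), (k, Comp C (mo k) g)) | k g.
                  k < length w \<and> w!k = T \<and> g \<in> Mor C \<and> Cod C g = ob (Suc k)}
      in (R \<union> R\<inverse>)\<^sup>* \<inter> (D \<times> D)))"

text \<open>The track object colim_i C(-, omega(i)), computed pointwise as a quotient.\<close>
definition track :: "('o,'m,'x) dcat_scheme \<Rightarrow> ('o,'m) path \<Rightarrow> ('o,'m,'m trk) autom" where
  "track C p = (case p of (w, ob, mo) \<Rightarrow>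
     (let E = track_rel C p
      in \<lparr> Elts = {(i, g). i \<le> length w \<and> g \<in> Mor C \<and> Cod C g = ob i} // E,
           Over = (\<lambda>c. Dom C (snd (SOME z. z \<in> c))),
           Act = (\<lambda>c f. (let z = (SOME z. z \<in> c) in E `` {(fst z, Comp C (snd z) f)})),
           Start = {E `` {(0, Idm C (ob 0))}},
           Acc = {E `` {(length w, Idm C (ob (length w)))}} \<rparr>))"

definition is_track :: "('o,'m,'x) dcat_scheme \<Rightarrow> ('o,'m,'e) autom \<Rightarrow> bool" where
  "is_track C X \<longleftrightarrow> is_autom C X \<and> (\<exists>p. is_path C p \<and> aiso C X (track C p))"

text \<open>Languages are iso-closed classes of track objects; we represent a class by its members
  whose carrier is of the type \<open>'m trk\<close> (which contains an isomorphic copy of every track object).\<close>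

type_synonym ('o,'m) lang = "('o,'m,'m trk) autom set"

definition is_lang :: "('o,'m,'x) dcat_scheme \<Rightarrow> ('o,'m) lang \<Rightarrow> bool" where
  "is_lang C L \<longleftrightarrow> (\<forall>G\<in>L. is_track C G)
     \<and> (\<forall>G\<in>L. \<forall>D. is_track C D \<and> aleq C D G \<longrightarrow> D \<in> L)"

definition down :: "('o,'m,'x) dcat_scheme \<Rightarrow> ('o,'m,'e) autom set \<Rightarrow> ('o,'m) lang" where
  "down C A = {D. is_track C D \<and> (\<exists>G\<in>A. aleq C D G)}"

definition iota :: "('o,'m,'x) dcat_scheme \<Rightarrow> 'o \<Rightarrow> ('o,'m,'m) autom" where
  "iota C U = \<lparr> Elts = {g \<in> Mor C. Cod C g = U}, Over = Dom C, Act = Comp C,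
                Start = {Idm C U}, Acc = {Idm C U} \<rparr>"

definition one_lang :: "('o,'m,'x) dcat_scheme \<Rightarrow> ('o,'m) lang" where
  "one_lang C = down C (iota C ` Ob C)"

definition lplus :: "('o,'m) lang \<Rightarrow> ('o,'m) lang \<Rightarrow> ('o,'m) lang" where
  "lplus L M = L \<union> M"

definition ltimes :: "('o,'m,'x) dcat_scheme \<Rightarrow> ('o,'m) lang \<Rightarrow> ('o,'m) lang \<Rightarrow> ('o,'m) lang" where
  "ltimes C L M = down C {glue C G D | G D. G \<in> L \<and> D \<in> M \<and> tgt G = src D}"

fun lpow :: "('o,'m,'x) dcat_scheme \<Rightarrow> ('o,'m) lang \<Rightarrow> nat \<Rightarrow> ('o,'m) lang" where
  "lpow C L 0 = one_lang C"
| "lpow C L (Suc k) = ltimes C L (lpow C L k)"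

definition lstar_plus :: "('o,'m,'x) dcat_scheme \<Rightarrow> ('o,'m) lang \<Rightarrow> ('o,'m) lang" where
  "lstar_plus C L = (\<Union>n\<in>{1..}. lpow C L n)"

inductive_set Rat :: "('o,'m,'x) dcat_scheme \<Rightarrow> ('o,'m) lang set" for C where
  Rat_empty: "{} \<in> Rat C"
| Rat_atom: "is_track C (G :: ('o,'m,'m trk) autom) \<Longrightarrow> down C {G} \<in> Rat C"
| Rat_plus: "L \<in> Rat C \<Longrightarrow> M \<in> Rat C \<Longrightarrow> lplus L M \<in> Rat C"
| Rat_times: "L \<in> Rat C \<Longrightarrow> M \<in> Rat C \<Longrightarrow> ltimes C L M \<in> Rat C"
| Rat_splus: "L \<in> Rat C \<Longrightarrow> lstar_plus C L \<in> Rat C"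

end

theory Submission
  imports Defs
begin

text \<open>The closure properties, the laws of \<open>+\<close>, distributivity and absorption are elementary
  set algebra on down-closed classes; the work lies in associativity of the product and the unit
  law \<open>L * 1 = L\<close>. The track object of a path is a colimit of representables, and so is the
  gluing of the track objects of two composable paths; hence that gluing is equivalent (morphisms
  in both directions) to the track object of the concatenated path. Up to \<open>\<sqsubseteq>\<close>, a product of
  languages therefore consists of tracks of concatenated paths, and associativity of the product
  reduces to associativity of path concatenation. (Gluing itself cannot be compared with its
  reassociation here, as it changes the carrier type.) The unit law holds because gluing anything
  below the representable \<open>\<iota>\<^sub>U\<close> onto the accept element adds nothing. Together they give
  \<open>L\<^sup>m * L\<^sup>n = L\<^sup>m\<^sup>+\<^sup>n\<close> for \<open>m \<ge> 1\<close>, from which the two laws of the Kleene plus follow.\<close>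

lemma is_categoryD:
  assumes "is_category C"
  shows cat_mor_ob: "\<And>f. f \<in> Mor C \<Longrightarrow> Dom C f \<in> Ob C \<and> Cod C f \<in> Ob C"
    and cat_id: "\<And>U. U \<in> Ob C \<Longrightarrow> Idm C U \<in> Mor C \<and> Dom C (Idm C U) = U \<and> Cod C (Idm C U) = U"
    and cat_comp: "\<And>f g. f \<in> Mor C \<Longrightarrow> g \<in> Mor C \<Longrightarrow> Cod C f = Dom C g \<Longrightarrow>
          Comp C g f \<in> Mor C \<and> Dom C (Comp C g f) = Dom C f \<and> Cod C (Comp C g f) = Cod C g"
    and cat_id_right: "\<And>f. f \<in> Mor C \<Longrightarrow> Comp C f (Idm C (Dom C f)) = f"
    and cat_id_left: "\<And>f. f \<in> Mor C \<Longrightarrow> Comp C (Idm C (Cod C f)) f = f"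
    and cat_assoc: "\<And>f g h. f \<in> Mor C \<Longrightarrow> g \<in> Mor C \<Longrightarrow> h \<in> Mor C \<Longrightarrow> Cod C f = Dom C g \<Longrightarrow>
          Cod C g = Dom C h \<Longrightarrow> Comp C h (Comp C g f) = Comp C (Comp C h g) f"
  using assms unfolding is_category_def by blast+

lemma is_dcat_category: "is_dcat C \<Longrightarrow> is_category C"
  unfolding is_dcat_def by simp

lemma is_automD:
  assumes "is_autom C X"
  shows aut_ob: "\<And>x. x \<in> Elts X \<Longrightarrow> Over X x \<in> Ob C"
    and aut_act: "\<And>x f. x \<in> Elts X \<Longrightarrow> f \<in> Mor C \<Longrightarrow> Cod C f = Over X x \<Longrightarrow>
          Act X x f \<in> Elts X \<and> Over X (Act X x f) = Dom C f"
    and aut_act_id: "\<And>x. x \<in> Elts X \<Longrightarrow> Act X x (Idm C (Over X x)) = x"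
    and aut_act_comp: "\<And>x f g. x \<in> Elts X \<Longrightarrow> f \<in> Mor C \<Longrightarrow> g \<in> Mor C \<Longrightarrow> Cod C f = Over X x \<Longrightarrow>
          Cod C g = Dom C f \<Longrightarrow> Act X (Act X x f) g = Act X x (Comp C f g)"
    and aut_start: "Start X \<subseteq> Elts X"
    and aut_acc: "Acc X \<subseteq> Elts X"
  using assms unfolding is_autom_def by blast+

definition pmor :: "('o,'m,'x) dcat_scheme \<Rightarrow> ('o,'m,'e) autom \<Rightarrow> ('o,'m,'f) autom
    \<Rightarrow> ('e \<Rightarrow> 'f) \<Rightarrow> bool" where
  "pmor C X Y h \<longleftrightarrow>
     (\<forall>x\<in>Elts X. h x \<in> Elts Y \<and> Over Y (h x) = Over X x)
   \<and> (\<forall>x\<in>Elts X. \<forall>f\<in>Mor C. Cod C f = Over X x \<longrightarrow> h (Act X x f) = Act Y (h x) f)"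

lemma amor_iff_pmor:
  "amor C X Y h \<longleftrightarrow> pmor C X Y h \<and> h ` Start X \<subseteq> Start Y \<and> h ` Acc X \<subseteq> Acc Y"
  unfolding amor_def pmor_def by blast

lemma pmorD:
  assumes "pmor C X Y h"
  shows pmor_elts: "\<And>x. x \<in> Elts X \<Longrightarrow> h x \<in> Elts Y"
    and pmor_over: "\<And>x. x \<in> Elts X \<Longrightarrow> Over Y (h x) = Over X x"
    and pmor_act: "\<And>x f. x \<in> Elts X \<Longrightarrow> f \<in> Mor C \<Longrightarrow> Cod C f = Over X x \<Longrightarrow> h (Act X x f) = Act Y (h x) f"
  using assms unfolding pmor_def by blast+

lemma pmor_id: "pmor C X X id"
  unfolding pmor_def by auto

lemma pmor_comp: "pmor C X Y h \<Longrightarrow> pmor C Y Z k \<Longrightarrow> pmor C X Z (\<lambda>x. k (h x))"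
  unfolding pmor_def by auto

lemma amor_comp: "amor C X Y h \<Longrightarrow> amor C Y Z k \<Longrightarrow> amor C X Z (k \<circ> h)"
  unfolding amor_def by (auto simp: image_subset_iff)

lemma amor_id: "amor C X X id"
  unfolding amor_def by auto

lemma aleq_refl: "aleq C X X"
  unfolding aleq_def using amor_id by blast

lemma aleq_trans: "aleq C X Y \<Longrightarrow> aleq C Y Z \<Longrightarrow> aleq C X Z"
  unfolding aleq_def using amor_comp by blast

lemma amor_start_singleton: "amor C X Y h \<Longrightarrow> Start X = {s} \<Longrightarrow> Start Y = {s'} \<Longrightarrow> h s = s'"
  unfolding amor_def by auto

lemma amor_acc_singleton: "amor C X Y h \<Longrightarrow> Acc X = {a} \<Longrightarrow> Acc Y = {a'} \<Longrightarrow> h a = a'"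
  unfolding amor_def by auto

definition quot_rel :: "'e set \<Rightarrow> 'e rel \<Rightarrow> 'e rel" where
  "quot_rel D R = (R \<union> R\<inverse>)\<^sup>* \<inter> D \<times> D"

definition quot_autom :: "'e set \<Rightarrow> ('e \<Rightarrow> 'o) \<Rightarrow> ('e \<Rightarrow> 'm \<Rightarrow> 'e) \<Rightarrow> 'e rel
    \<Rightarrow> 'e set set \<Rightarrow> 'e set set \<Rightarrow> ('o,'m,'e set) autom" where
  "quot_autom D ov ac R St Ac = \<lparr> Elts = D // quot_rel D R, Over = (\<lambda>c. ov (SOME z. z \<in> c)),
     Act = (\<lambda>c f. quot_rel D R `` {ac (SOME z. z \<in> c) f}), Start = St, Acc = Ac \<rparr>"

locale quotient_presheaf =
  fixes C :: "('o,'m,'x) dcat_scheme" and D :: "'e set" and ov :: "'e \<Rightarrow> 'o"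
    and ac :: "'e \<Rightarrow> 'm \<Rightarrow> 'e" and R :: "'e rel"
  assumes cat: "is_category C"
    and ov_ob: "\<And>z. z \<in> D \<Longrightarrow> ov z \<in> Ob C"
    and ac_dom: "\<And>z f. z \<in> D \<Longrightarrow> f \<in> Mor C \<Longrightarrow> Cod C f = ov z \<Longrightarrow> ac z f \<in> D"
    and ov_ac: "\<And>z f. z \<in> D \<Longrightarrow> f \<in> Mor C \<Longrightarrow> Cod C f = ov z \<Longrightarrow> ov (ac z f) = Dom C f"
    and ac_id: "\<And>z. z \<in> D \<Longrightarrow> ac z (Idm C (ov z)) = z"
    and ac_comp: "\<And>z f g. z \<in> D \<Longrightarrow> f \<in> Mor C \<Longrightarrow> g \<in> Mor C \<Longrightarrow> Cod C f = ov z \<Longrightarrow>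
        Cod C g = Dom C f \<Longrightarrow> ac (ac z f) g = ac z (Comp C f g)"
    and R_ov: "\<And>z z'. (z, z') \<in> R \<Longrightarrow> ov z = ov z'"
    and R_ac: "\<And>z z' f. (z, z') \<in> R \<Longrightarrow> f \<in> Mor C \<Longrightarrow> Cod C f = ov z \<Longrightarrow> (ac z f, ac z' f) \<in> R"
begin

abbreviation "E \<equiv> quot_rel D R"

lemma gen_equiv_compat:
  "(z, z') \<in> (R \<union> R\<inverse>)\<^sup>* \<Longrightarrow>
     ov z' = ov z \<and> (\<forall>f\<in>Mor C. Cod C f = ov z \<longrightarrow> (ac z f, ac z' f) \<in> (R \<union> R\<inverse>)\<^sup>*)"
proof (induction rule: rtrancl_induct)
  case (step y z')
  from step.hyps(2) have "ov z' = ov y" using R_ov by auto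
  moreover have "(ac y f, ac z' f) \<in> R \<union> R\<inverse>" if "f \<in> Mor C" "Cod C f = ov z" for f
    using step.hyps(2) R_ac[of y z' f] R_ac[of z' y f] that \<open>ov z' = ov y\<close> step.IH by auto
  ultimately show ?case using step.IH by (auto intro: rtrancl_into_rtrancl)
qed auto

lemma gen_equiv_invariant:
  "(z, z') \<in> (R \<union> R\<inverse>)\<^sup>* \<Longrightarrow> (\<And>a b. (a, b) \<in> R \<Longrightarrow> v a = v b) \<Longrightarrow> v z = v z'"
  by (induction rule: rtrancl_induct) auto

lemma equiv_E: "equiv D E"
proof -
  have "sym ((R \<union> R\<inverse>)\<^sup>*)" by (simp add: sym_Un_converse sym_rtrancl)
  then show ?thesis
    unfolding equiv_def quot_rel_def refl_on_def sym_def trans_def by (auto intro: rtrancl_trans)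
qed

lemma class_in_quotient: "z \<in> D \<Longrightarrow> E `` {z} \<in> D // E"
  by (rule quotientI)

lemma mem_class: "z \<in> E `` {z0} \<Longrightarrow> z \<in> D \<and> z0 \<in> D \<and> (z0, z) \<in> (R \<union> R\<inverse>)\<^sup>*"
  unfolding quot_rel_def by auto

lemma some_mem_class: "z0 \<in> D \<Longrightarrow> (SOME z. z \<in> E `` {z0}) \<in> E `` {z0}"
  by (rule someI[of _ z0]) (auto simp: quot_rel_def)

lemma class_eq: "z \<in> E `` {z0} \<Longrightarrow> E `` {z} = E `` {z0}"
  using equiv_E by (metis equiv_class_eq_iff Image_singleton_iff)

lemma related_class_eq: "(z, z') \<in> R \<Longrightarrow> z \<in> D \<Longrightarrow> z' \<in> D \<Longrightarrow> E `` {z} = E `` {z'}"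
  by (rule class_eq[symmetric]) (auto simp: quot_rel_def)

lemma Elts_quot_autom: "Elts (quot_autom D ov ac R St Ac) = D // E"
  unfolding quot_autom_def by simp

lemma Over_class: "z0 \<in> D \<Longrightarrow> Over (quot_autom D ov ac R St Ac) (E `` {z0}) = ov z0"
  using some_mem_class[of z0] mem_class gen_equiv_compat unfolding quot_autom_def by fastforce

lemma Act_class:
  assumes "z0 \<in> D" "f \<in> Mor C" "Cod C f = ov z0"
  shows "Act (quot_autom D ov ac R St Ac) (E `` {z0}) f = E `` {ac z0 f}"
proof -
  define z where "z = (SOME z. z \<in> E `` {z0})"
  have "z \<in> D" and ch: "(z0, z) \<in> (R \<union> R\<inverse>)\<^sup>*"
    using some_mem_class[OF assms(1)] mem_class unfolding z_def by auto
  then have "ac z f \<in> D" using ac_dom assms gen_equiv_compat by auto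
  moreover have "(ac z0 f, ac z f) \<in> (R \<union> R\<inverse>)\<^sup>*" using gen_equiv_compat[OF ch] assms by auto
  ultimately have "ac z f \<in> E `` {ac z0 f}" using ac_dom assms unfolding quot_rel_def by auto
  moreover have "Act (quot_autom D ov ac R St Ac) (E `` {z0}) f = E `` {ac z f}"
    unfolding quot_autom_def z_def by simp
  ultimately show ?thesis using class_eq by simp
qed

lemma quot_autom_autom:
  assumes "St \<subseteq> D // E" "Ac \<subseteq> D // E"
  shows "is_autom C (quot_autom D ov ac R St Ac)"
  unfolding is_autom_def
proof (intro conjI ballI impI)
  let ?Q = "quot_autom D ov ac R St Ac"
  fix c assume "c \<in> Elts ?Q"
  then obtain z0 where z0: "z0 \<in> D" "c = E `` {z0}" unfolding Elts_quot_autom by (rule quotientE)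
  show "Over ?Q c \<in> Ob C" using z0 Over_class ov_ob by simp
  show "Act ?Q c (Idm C (Over ?Q c)) = c"
    using z0 Over_class Act_class ac_id ov_ob cat_id[OF cat] by simp
  fix f assume f: "f \<in> Mor C" "Cod C f = Over ?Q c"
  then have f': "Cod C f = ov z0" using z0 Over_class by simp
  have fz: "ac z0 f \<in> D" "ov (ac z0 f) = Dom C f" using ac_dom ov_ac z0 f f' by auto
  show "Act ?Q c f \<in> Elts ?Q" "Over ?Q (Act ?Q c f) = Dom C f"
    using z0 f f' fz Act_class Over_class Elts_quot_autom class_in_quotient by simp_all
  fix g assume g: "g \<in> Mor C" "Cod C g = Dom C f"
  have "Comp C f g \<in> Mor C" "Cod C (Comp C f g) = ov z0" using cat_comp[OF cat g(1) f(1)] f' g by auto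
  then show "Act ?Q (Act ?Q c f) g = Act ?Q c (Comp C f g)"
    using z0 Act_class[OF z0(1) f(1) f'] Act_class[OF fz(1) g(1)] fz g Act_class[OF z0(1)]
      ac_comp[OF z0(1) f(1) g(1) f'] by simp
qed (use assms in \<open>auto simp: quot_autom_def\<close>)

lemma quot_autom_univ:
  assumes v_elts: "\<And>z. z \<in> D \<Longrightarrow> v z \<in> Elts W \<and> Over W (v z) = ov z"
    and v_act: "\<And>z f. z \<in> D \<Longrightarrow> f \<in> Mor C \<Longrightarrow> Cod C f = ov z \<Longrightarrow> v (ac z f) = Act W (v z) f"
    and v_R: "\<And>a b. (a, b) \<in> R \<Longrightarrow> v a = v b"
  shows "pmor C (quot_autom D ov ac R St Ac) W (\<lambda>c. v (SOME z. z \<in> c))"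
    and "\<And>z. z \<in> D \<Longrightarrow> v (SOME z'. z' \<in> E `` {z}) = v z"
proof -
  show v_class: "v (SOME z'. z' \<in> E `` {z}) = v z" if "z \<in> D" for z
    using some_mem_class[OF that] mem_class gen_equiv_invariant[of z _ v] v_R by metis
  show "pmor C (quot_autom D ov ac R St Ac) W (\<lambda>c. v (SOME z. z \<in> c))"
    unfolding pmor_def
  proof (intro conjI ballI impI)
    let ?Q = "quot_autom D ov ac R St Ac"
    fix c assume "c \<in> Elts ?Q"
    then obtain z0 where z0: "z0 \<in> D" "c = E `` {z0}" unfolding Elts_quot_autom by (rule quotientE)
    show "v (SOME z. z \<in> c) \<in> Elts W" "Over W (v (SOME z. z \<in> c)) = Over ?Q c"
      using v_class v_elts z0 Over_class by simp_all
    fix f assume f: "f \<in> Mor C" "Cod C f = Over ?Q c"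
    then have "Cod C f = ov z0" using z0 Over_class by simp
    then show "v (SOME z. z \<in> Act ?Q c f) = Act W (v (SOME z. z \<in> c)) f"
      using z0 Act_class[OF z0(1) f(1)] ac_dom v_class v_act f by simp
  qed
qed

end

section \<open>Track objects as quotients\<close>

definition track_dom :: "('o,'m,'x) dcat_scheme \<Rightarrow> ('o,'m) path \<Rightarrow> (nat \<times> 'm) set" where
  "track_dom C p = (case p of (w, ob, mo) \<Rightarrow> {(i, g). i \<le> length w \<and> g \<in> Mor C \<and> Cod C g = ob i})"

definition track_gen :: "('o,'m,'x) dcat_scheme \<Rightarrow> ('o,'m) path \<Rightarrow> (nat \<times> 'm) rel" where
  "track_gen C p = (case p of (w, ob, mo) \<Rightarrow>
     {((k, g), (Suc k, Comp C (mo k) g)) | k g.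
        k < length w \<and> w!k \<in> {S, I} \<and> g \<in> Mor C \<and> Cod C g = ob k}
   \<union> {((Suc k, g), (k, Comp C (mo k) g)) | k g.
        k < length w \<and> w!k = T \<and> g \<in> Mor C \<and> Cod C g = ob (Suc k)})"

text \<open>The image of \<open>id\<^bsub>\<omega>(i)\<^esub>\<close> in the track object: the element over the \<open>i\<close>-th vertex.\<close>

definition track_elem :: "('o,'m,'x) dcat_scheme \<Rightarrow> ('o,'m) path \<Rightarrow> nat \<Rightarrow> 'm trk" where
  "track_elem C p i = track_rel C p `` {(i, Idm C (fst (snd p) i))}"

abbreviation track_ov :: "('o,'m,'x) dcat_scheme \<Rightarrow> nat \<times> 'm \<Rightarrow> 'o" where
  "track_ov C \<equiv> \<lambda>z. Dom C (snd z)"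

abbreviation track_ac :: "('o,'m,'x) dcat_scheme \<Rightarrow> nat \<times> 'm \<Rightarrow> 'm \<Rightarrow> nat \<times> 'm" where
  "track_ac C \<equiv> \<lambda>z f. (fst z, Comp C (snd z) f)"

lemma track_rel_eq: "track_rel C p = quot_rel (track_dom C p) (track_gen C p)"
  by (cases p) (simp add: track_rel_def quot_rel_def track_dom_def track_gen_def Let_def)

lemma track_domE:
  assumes "z \<in> track_dom C (w, ob, mo)"
  obtains i g where "z = (i, g)" "i \<le> length w" "g \<in> Mor C" "Cod C g = ob i"
  using assms by (auto simp: track_dom_def)

lemma track_eq_quot_autom:
  "track C (w, ob, mo) = quot_autom (track_dom C (w, ob, mo)) (track_ov C) (track_ac C)
     (track_gen C (w, ob, mo)) {track_elem C (w, ob, mo) 0} {track_elem C (w, ob, mo) (length w)}"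
  by (simp add: track_def quot_autom_def track_rel_eq track_elem_def Let_def track_dom_def)

lemma Start_track: "Start (track C (w, ob, mo)) = {track_elem C (w, ob, mo) 0}"
  and Acc_track: "Acc (track C (w, ob, mo)) = {track_elem C (w, ob, mo) (length w)}"
  unfolding track_eq_quot_autom quot_autom_def by simp_all

lemma is_pathD:
  assumes "is_dcat C" "is_path C (w, ob, mo)"
  shows path_ob: "\<And>i. i \<le> length w \<Longrightarrow> ob i \<in> Ob C"
    and path_mor: "\<And>k. k < length w \<Longrightarrow> mo k \<in> Mor C"
    and path_forward: "\<And>k. k < length w \<Longrightarrow> w!k \<noteq> T \<Longrightarrow> Dom C (mo k) = ob k \<and> Cod C (mo k) = ob (Suc k)"
    and path_backward: "\<And>k. k < length w \<Longrightarrow> w!k = T \<Longrightarrow> Dom C (mo k) = ob (Suc k) \<and> Cod C (mo k) = ob k"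
proof -
  have "Plus C \<subseteq> Mor C" "Minus C \<subseteq> Mor C"
    using assms(1) unfolding is_dcat_def wide_subcat_def by auto
  then show "mo k \<in> Mor C" if "k < length w" for k
    using assms(2) that unfolding is_path_def by (cases "w!k") auto
  show "Dom C (mo k) = ob k \<and> Cod C (mo k) = ob (Suc k)" if "k < length w" "w!k \<noteq> T" for k
    using assms(2) that unfolding is_path_def by (cases "w!k") auto
qed (use assms(2) in \<open>auto simp: is_path_def\<close>)

lemma track_genE:
  assumes "(z, z') \<in> track_gen C (w, ob, mo)"
  obtains (forward) k g where "z = (k, g)" "z' = (Suc k, Comp C (mo k) g)" "k < length w" "w!k \<noteq> T"
      "g \<in> Mor C" "Cod C g = ob k"
    | (backward) k g where "z = (Suc k, g)" "z' = (k, Comp C (mo k) g)" "k < length w" "w!k = T"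
      "g \<in> Mor C" "Cod C g = ob (Suc k)"
  using assms unfolding track_gen_def by auto

lemma track_gen_over:
  assumes dc: "is_dcat C" and p: "is_path C (w, ob, mo)" and zz: "(z, z') \<in> track_gen C (w, ob, mo)"
  shows "Dom C (snd z) = Dom C (snd z')"
  using zz
proof (cases rule: track_genE)
  case (forward k g)
  then show ?thesis using cat_comp[OF is_dcat_category[OF dc], of g "mo k"] is_pathD[OF dc p] by simp
next
  case (backward k g)
  then show ?thesis using cat_comp[OF is_dcat_category[OF dc], of g "mo k"] is_pathD[OF dc p] by simp
qed

lemma track_gen_act:
  assumes dc: "is_dcat C" and p: "is_path C (w, ob, mo)" and zz: "(z, z') \<in> track_gen C (w, ob, mo)"
    and f: "f \<in> Mor C" "Cod C f = Dom C (snd z)"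
  shows "(track_ac C z f, track_ac C z' f) \<in> track_gen C (w, ob, mo)"
  using zz
proof (cases rule: track_genE)
  case (forward k g)
  have "Comp C (Comp C (mo k) g) f = Comp C (mo k) (Comp C g f)"
    using cat_assoc[OF is_dcat_category[OF dc], of f g "mo k"] forward f is_pathD[OF dc p] by auto
  moreover have "Comp C g f \<in> Mor C" "Cod C (Comp C g f) = ob k"
    using cat_comp[OF is_dcat_category[OF dc], of f g] forward f by auto
  ultimately show ?thesis using forward by (cases "w!k") (auto simp: track_gen_def)
next
  case (backward k g)
  have "Comp C (Comp C (mo k) g) f = Comp C (mo k) (Comp C g f)"
    using cat_assoc[OF is_dcat_category[OF dc], of f g "mo k"] backward f is_pathD[OF dc p] by auto
  moreover have "Comp C g f \<in> Mor C" "Cod C (Comp C g f) = ob (Suc k)"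
    using cat_comp[OF is_dcat_category[OF dc], of f g] backward f by auto
  ultimately show ?thesis using backward by (auto simp: track_gen_def)
qed

lemma track_quotient_presheaf:
  assumes dc: "is_dcat C" and p: "is_path C (w, ob, mo)"
  shows "quotient_presheaf C (track_dom C (w, ob, mo)) (track_ov C) (track_ac C) (track_gen C (w, ob, mo))"
proof
  have cat: "is_category C" using dc by (rule is_dcat_category)
  then show "is_category C" .
  fix z f g
  assume z: "z \<in> track_dom C (w, ob, mo)"
  then show "Dom C (snd z) \<in> Ob C" "track_ac C z (Idm C (Dom C (snd z))) = z"
    using cat_mor_ob[OF cat] cat_id_right[OF cat] by (auto simp: track_dom_def)
  assume f: "f \<in> Mor C" "Cod C f = Dom C (snd z)"
  with z show "track_ac C z f \<in> track_dom C (w, ob, mo)" "Dom C (snd (track_ac C z f)) = Dom C f"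
    using cat_comp[OF cat] by (auto simp: track_dom_def)
  assume "g \<in> Mor C" "Cod C g = Dom C f"
  with z f show "track_ac C (track_ac C z f) g = track_ac C z (Comp C f g)"
    using cat_assoc[OF cat] by (auto simp: track_dom_def)
qed (use track_gen_over[OF dc p] track_gen_act[OF dc p] in auto)

lemma track_id_in_dom:
  "is_dcat C \<Longrightarrow> is_path C (w, ob, mo) \<Longrightarrow> i \<le> length w \<Longrightarrow> (i, Idm C (ob i)) \<in> track_dom C (w, ob, mo)"
  using cat_id[OF is_dcat_category] path_ob by (fastforce simp: track_dom_def)

lemma track_autom: "is_dcat C \<Longrightarrow> is_path C (w, ob, mo) \<Longrightarrow> is_autom C (track C (w, ob, mo))"
  unfolding track_eq_quot_autom
  by (rule quotient_presheaf.quot_autom_autom[OF track_quotient_presheaf])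
    (auto simp: track_elem_def track_rel_eq
      intro!: quotient_presheaf.class_in_quotient[OF track_quotient_presheaf] track_id_in_dom)

lemma track_elem_eq:
  "track_elem C (w, ob, mo) i = quot_rel (track_dom C (w, ob, mo)) (track_gen C (w, ob, mo)) `` {(i, Idm C (ob i))}"
  by (simp add: track_elem_def track_rel_eq)

lemma track_elem_in_track:
  assumes dc: "is_dcat C" and p: "is_path C (w, ob, mo)" and i: "i \<le> length w"
  shows "track_elem C (w, ob, mo) i \<in> Elts (track C (w, ob, mo))"
    and "Over (track C (w, ob, mo)) (track_elem C (w, ob, mo) i) = ob i"
proof -
  interpret Q: quotient_presheaf C "track_dom C (w, ob, mo)" "track_ov C" "track_ac C" "track_gen C (w, ob, mo)"
    using track_quotient_presheaf[OF dc p] .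
  show "track_elem C (w, ob, mo) i \<in> Elts (track C (w, ob, mo))"
    unfolding track_eq_quot_autom Q.Elts_quot_autom track_elem_eq
    by (rule Q.class_in_quotient[OF track_id_in_dom[OF dc p i]])
  show "Over (track C (w, ob, mo)) (track_elem C (w, ob, mo) i) = ob i"
    unfolding track_eq_quot_autom track_elem_eq using Q.Over_class[OF track_id_in_dom[OF dc p i]]
      cat_id[OF is_dcat_category[OF dc]] path_ob[OF dc p i] by simp
qed

lemma src_tgt_track:
  assumes "is_dcat C" "is_path C (w, ob, mo)"
  shows "src (track C (w, ob, mo)) = ob 0" "tgt (track C (w, ob, mo)) = ob (length w)"
  unfolding src_def tgt_def Start_track Acc_track using track_elem_in_track(2)[OF assms] by simp_all

definition lift_step :: "('o,'m,'e) autom \<Rightarrow> lgen \<Rightarrow> 'm \<Rightarrow> 'e \<Rightarrow> 'e \<Rightarrow> bool" where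
  "lift_step W l m xa xb \<longleftrightarrow> (if l = T then Act W xa m = xb else Act W xb m = xa)"

definition path_lift :: "('o,'m,'x) dcat_scheme \<Rightarrow> lgen list \<Rightarrow> (nat \<Rightarrow> 'o) \<Rightarrow> (nat \<Rightarrow> 'm)
    \<Rightarrow> ('o,'m,'e) autom \<Rightarrow> (nat \<Rightarrow> 'e) \<Rightarrow> bool" where
  "path_lift C w ob mo W x \<longleftrightarrow> (\<forall>i\<le>length w. x i \<in> Elts W \<and> Over W (x i) = ob i)
     \<and> (\<forall>k<length w. lift_step W (w!k) (mo k) (x k) (x (Suc k)))"

lemma path_liftD:
  assumes "path_lift C w ob mo W x"
  shows "\<And>i. i \<le> length w \<Longrightarrow> x i \<in> Elts W \<and> Over W (x i) = ob i"
    and "\<And>k. k < length w \<Longrightarrow> w!k \<noteq> T \<Longrightarrow> Act W (x (Suc k)) (mo k) = x k"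
    and "\<And>k. k < length w \<Longrightarrow> w!k = T \<Longrightarrow> Act W (x k) (mo k) = x (Suc k)"
  using assms unfolding path_lift_def lift_step_def by auto

lemma path_lift_pmor:
  assumes dc: "is_dcat C" and p: "is_path C (w, ob, mo)" and h: "pmor C W W' h"
    and x: "path_lift C w ob mo W x"
  shows "path_lift C w ob mo W' (\<lambda>i. h (x i))"
  unfolding path_lift_def lift_step_def
proof (intro conjI allI impI)
  note x_elts = path_liftD(1)[OF x]
  show "h (x i) \<in> Elts W'" "Over W' (h (x i)) = ob i" if "i \<le> length w" for i
    using x_elts[OF that] pmorD[OF h] by auto
  fix k assume k: "k < length w"
  show "if w!k = T then Act W' (h (x k)) (mo k) = h (x (Suc k)) else Act W' (h (x (Suc k))) (mo k) = h (x k)"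
  proof (cases "w!k = T")
    case True
    then show ?thesis using pmor_act[OF h, of "x k" "mo k"] path_liftD(3)[OF x k] x_elts[of k]
        path_mor[OF dc p k] path_backward[OF dc p k] k by simp
  next
    case False
    then show ?thesis using pmor_act[OF h, of "x (Suc k)" "mo k"] path_liftD(2)[OF x k] x_elts[of "Suc k"]
        path_mor[OF dc p k] path_forward[OF dc p k] k by simp
  qed
qed

lemma Act_track_elem:
  assumes dc: "is_dcat C" and p: "is_path C (w, ob, mo)" and i: "i \<le> length w"
    and f: "f \<in> Mor C" "Cod C f = ob i"
  shows "Act (track C (w, ob, mo)) (track_elem C (w, ob, mo) i) f
    = quot_rel (track_dom C (w, ob, mo)) (track_gen C (w, ob, mo)) `` {(i, f)}"
proof -
  interpret Q: quotient_presheaf C "track_dom C (w, ob, mo)" "track_ov C" "track_ac C" "track_gen C (w, ob, mo)"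
    using track_quotient_presheaf[OF dc p] .
  have cat: "is_category C" using dc by (rule is_dcat_category)
  have "Cod C f = Dom C (Idm C (ob i))" using f cat_id[OF cat] path_ob[OF dc p i] by simp
  then show ?thesis
    unfolding track_eq_quot_autom track_elem_eq
    using Q.Act_class[OF track_id_in_dom[OF dc p i] f(1)] cat_id_left[OF cat f(1)] f(2) by simp
qed

lemma track_elem_lift:
  assumes dc: "is_dcat C" and p: "is_path C (w, ob, mo)"
  shows "path_lift C w ob mo (track C (w, ob, mo)) (track_elem C (w, ob, mo))"
  unfolding path_lift_def lift_step_def
proof (intro conjI allI impI)
  interpret Q: quotient_presheaf C "track_dom C (w, ob, mo)" "track_ov C" "track_ac C" "track_gen C (w, ob, mo)"
    using track_quotient_presheaf[OF dc p] .
  have cat: "is_category C" using dc by (rule is_dcat_category)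
  show "track_elem C (w, ob, mo) i \<in> Elts (track C (w, ob, mo))"
    "Over (track C (w, ob, mo)) (track_elem C (w, ob, mo) i) = ob i" if "i \<le> length w" for i
    using track_elem_in_track[OF dc p that] by auto
  fix k assume k: "k < length w"
  have m: "mo k \<in> Mor C" "Comp C (mo k) (Idm C (Dom C (mo k))) = mo k"
    using path_mor[OF dc p k] cat_id_right[OF cat] by auto
  have ids: "(k, Idm C (ob k)) \<in> track_dom C (w, ob, mo)" "(Suc k, Idm C (ob (Suc k))) \<in> track_dom C (w, ob, mo)"
    using track_id_in_dom[OF dc p] k by auto
  show "if w!k = T
      then Act (track C (w, ob, mo)) (track_elem C (w, ob, mo) k) (mo k) = track_elem C (w, ob, mo) (Suc k)
      else Act (track C (w, ob, mo)) (track_elem C (w, ob, mo) (Suc k)) (mo k) = track_elem C (w, ob, mo) k"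
  proof (cases "w!k = T")
    case True
    then have mk: "Dom C (mo k) = ob (Suc k)" "Cod C (mo k) = ob k" using path_backward[OF dc p k] by auto
    have "((Suc k, Idm C (ob (Suc k))), (k, mo k)) \<in> track_gen C (w, ob, mo)"
      using k True m mk cat_id[OF cat] path_ob[OF dc p, of "Suc k"] by (force simp: track_gen_def)
    then show ?thesis using True Act_track_elem[OF dc p _ m(1) mk(2)] k ids Q.related_class_eq
      by (simp add: track_elem_eq track_dom_def mk m)
  next
    case False
    then have mk: "Dom C (mo k) = ob k" "Cod C (mo k) = ob (Suc k)" using path_forward[OF dc p k] by auto
    have "((k, Idm C (ob k)), (Suc k, mo k)) \<in> track_gen C (w, ob, mo)"
      using k False m mk cat_id[OF cat] path_ob[OF dc p, of k] by (cases "w!k") (force simp: track_gen_def)+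
    then show ?thesis using False Act_track_elem[OF dc p _ m(1) mk(2)] k ids Q.related_class_eq
      by (simp add: track_elem_eq track_dom_def mk m)
  qed
qed

lemma path_lift_track_gen:
  assumes dc: "is_dcat C" and p: "is_path C (w, ob, mo)" and W: "is_autom C W"
    and x: "path_lift C w ob mo W x" and zz: "(z, z') \<in> track_gen C (w, ob, mo)"
  shows "Act W (x (fst z)) (snd z) = Act W (x (fst z')) (snd z')"
  using zz
proof (cases rule: track_genE)
  case (forward k g)
  then show ?thesis using aut_act_comp[OF W, of "x (Suc k)" "mo k" g] path_liftD(1)[OF x, of "Suc k"]
      path_mor[OF dc p, of k] path_forward[OF dc p, of k] path_liftD(2)[OF x, of k] by simp
next
  case (backward k g)
  then show ?thesis using aut_act_comp[OF W, of "x k" "mo k" g] path_liftD(1)[OF x, of k]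
      path_mor[OF dc p, of k] path_backward[OF dc p, of k] path_liftD(3)[OF x, of k] by simp
qed

text \<open>The colimit property of the track object: a lift of the path to \<open>W\<close> is the same as a
  morphism of presheaves out of the track object.\<close>

lemma track_univ:
  assumes dc: "is_dcat C" and p: "is_path C (w, ob, mo)" and W: "is_autom C W"
    and x: "path_lift C w ob mo W x"
  obtains u where "pmor C (track C (w, ob, mo)) W u"
    and "\<And>i. i \<le> length w \<Longrightarrow> u (track_elem C (w, ob, mo) i) = x i"
proof -
  interpret Q: quotient_presheaf C "track_dom C (w, ob, mo)" "track_ov C" "track_ac C" "track_gen C (w, ob, mo)"
    using track_quotient_presheaf[OF dc p] .
  note x_elts = path_liftD(1)[OF x]
  define v where "v = (\<lambda>z. Act W (x (fst z)) (snd z))"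
  have v_elts: "v z \<in> Elts W \<and> Over W (v z) = Dom C (snd z)" if z: "z \<in> track_dom C (w, ob, mo)" for z
  proof -
    obtain i g where "z = (i, g)" "i \<le> length w" "g \<in> Mor C" "Cod C g = ob i"
      using track_domE[OF z] .
    then show ?thesis using aut_act[OF W, of "x i" g] x_elts[of i] by (simp add: v_def)
  qed
  have v_act: "v (track_ac C z f) = Act W (v z) f"
    if z: "z \<in> track_dom C (w, ob, mo)" and f: "f \<in> Mor C" "Cod C f = Dom C (snd z)" for z f
  proof -
    obtain i g where "z = (i, g)" "i \<le> length w" "g \<in> Mor C" "Cod C g = ob i"
      using track_domE[OF z] .
    then show ?thesis using aut_act_comp[OF W, of "x i" g f] x_elts[of i] f by (simp add: v_def)
  qed
  have v_gen: "v z = v z'" if "(z, z') \<in> track_gen C (w, ob, mo)" for z z'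
    using path_lift_track_gen[OF dc p W x that] by (simp add: v_def)
  show ?thesis
  proof (rule that)
    show "pmor C (track C (w, ob, mo)) W (\<lambda>c. v (SOME z. z \<in> c))"
      unfolding track_eq_quot_autom by (rule Q.quot_autom_univ(1)[OF v_elts v_act v_gen])
    fix i assume i: "i \<le> length w"
    have "x i \<in> Elts W" "Over W (x i) = ob i" using x_elts[OF i] by auto
    then have "v (i, Idm C (ob i)) = x i" using aut_act_id[OF W, of "x i"] unfolding v_def by simp
    moreover have "v (SOME z. z \<in> track_elem C (w, ob, mo) i) = v (i, Idm C (ob i))"
      unfolding track_elem_eq by (rule Q.quot_autom_univ(2)[OF v_elts v_act v_gen track_id_in_dom[OF dc p i]])
    ultimately show "v (SOME z. z \<in> track_elem C (w, ob, mo) i) = x i" by simp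
  qed
qed

lemma track_amor:
  assumes dc: "is_dcat C" and p: "is_path C (w, ob, mo)" and W: "is_autom C W"
    and x: "path_lift C w ob mo W x" and "x 0 \<in> Start W" and "x (length w) \<in> Acc W"
  shows "aleq C (track C (w, ob, mo)) W"
proof -
  obtain u where "pmor C (track C (w, ob, mo)) W u" "\<And>i. i \<le> length w \<Longrightarrow> u (track_elem C (w, ob, mo) i) = x i"
    using track_univ[OF dc p W x] by blast
  then show ?thesis
    unfolding aleq_def amor_iff_pmor Start_track Acc_track using assms(5,6) by auto
qed

lemma track_is_track:
  assumes "is_dcat C" "is_path C p"
  shows "is_track C (track C p)"
proof -
  obtain w ob mo where p: "p = (w, ob, mo)" by (cases p)
  have "is_autom C (track C p)" using track_autom[OF assms(1)] assms(2) p by simp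
  moreover have "aiso C (track C p) (track C p)"
    unfolding aiso_def by (rule exI[of _ id], rule exI[of _ id]) (simp add: amor_id)
  ultimately show ?thesis unfolding is_track_def using assms(2) by blast
qed

lemma is_trackE:
  assumes dc: "is_dcat C" and G: "is_track C G"
  obtains w ob mo h k where "is_path C (w, ob, mo)" "is_autom C G"
    "amor C G (track C (w, ob, mo)) h" "amor C (track C (w, ob, mo)) G k"
    "Start G = {k (track_elem C (w, ob, mo) 0)}" "Acc G = {k (track_elem C (w, ob, mo) (length w))}"
proof -
  from G obtain q h k where q: "is_path C q" and aut: "is_autom C G"
    and h: "amor C G (track C q) h" and k: "amor C (track C q) G k" and kh: "\<forall>x\<in>Elts G. k (h x) = x"
    unfolding is_track_def aiso_def by blast
  obtain w ob mo where q_eq: "q = (w, ob, mo)" by (cases q)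
  note p = q[unfolded q_eq] and h = h[unfolded q_eq] and k = k[unfolded q_eq]
  have inverse_singleton: "A = {k s}" if "h ` A \<subseteq> {s}" "k ` {s} \<subseteq> A" "A \<subseteq> Elts G" for A s
  proof
    show "A \<subseteq> {k s}"
    proof
      fix x assume "x \<in> A"
      then have "h x = s" "x \<in> Elts G" using that by auto
      then show "x \<in> {k s}" using kh by force
    qed
  qed (use that in auto)
  have "Start G = {k (track_elem C (w, ob, mo) 0)}"
    using h k aut_start[OF aut] unfolding amor_def Start_track by (intro inverse_singleton) auto
  moreover have "Acc G = {k (track_elem C (w, ob, mo) (length w))}"
    using h k aut_acc[OF aut] unfolding amor_def Acc_track by (intro inverse_singleton) auto
  ultimately show ?thesis by (rule that[OF p aut h k])
qed

section \<open>Gluing\<close>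

definition glue_dom :: "('o,'m,'e) autom \<Rightarrow> ('o,'m,'e) autom \<Rightarrow> ('e + 'e) set" where
  "glue_dom X Y = Inl ` Elts X \<union> Inr ` Elts Y"

definition glue_gen :: "('o,'m,'x) dcat_scheme \<Rightarrow> ('o,'m,'e) autom \<Rightarrow> ('o,'m,'e) autom \<Rightarrow> ('e + 'e) rel" where
  "glue_gen C X Y = {(Inl (Act X (the_elem (Acc X)) f), Inr (Act Y (the_elem (Start Y)) f)) | f.
     f \<in> Mor C \<and> Cod C f = tgt X}"

definition glue_ov :: "('o,'m,'e) autom \<Rightarrow> ('o,'m,'e) autom \<Rightarrow> 'e + 'e \<Rightarrow> 'o" where
  "glue_ov X Y = case_sum (Over X) (Over Y)"

definition glue_ac :: "('o,'m,'e) autom \<Rightarrow> ('o,'m,'e) autom \<Rightarrow> 'e + 'e \<Rightarrow> 'm \<Rightarrow> 'e + 'e" where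
  "glue_ac X Y = (\<lambda>z f. case z of Inl x \<Rightarrow> Inl (Act X x f) | Inr y \<Rightarrow> Inr (Act Y y f))"

lemma glue_rel_eq: "glue_rel C X Y = quot_rel (glue_dom X Y) (glue_gen C X Y)"
  by (simp add: glue_rel_def quot_rel_def glue_dom_def glue_gen_def Let_def)

lemma glue_eq_quot_autom:
  "glue C X Y = quot_autom (glue_dom X Y) (glue_ov X Y) (glue_ac X Y) (glue_gen C X Y)
     ((\<lambda>x. glue_rel C X Y `` {Inl x}) ` Start X) ((\<lambda>y. glue_rel C X Y `` {Inr y}) ` Acc Y)"
  by (simp add: glue_def quot_autom_def glue_rel_eq glue_dom_def glue_ov_def glue_ac_def Let_def)

lemma Start_glue: "Start (glue C X Y) = (\<lambda>x. glue_rel C X Y `` {Inl x}) ` Start X"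
  and Acc_glue: "Acc (glue C X Y) = (\<lambda>y. glue_rel C X Y `` {Inr y}) ` Acc Y"
  by (simp_all add: glue_def Let_def)

locale gluing =
  fixes C :: "('o,'m,'x) dcat_scheme" and X Y :: "('o,'m,'e) autom" and ax sy :: 'e
  assumes cat: "is_category C" and X: "is_autom C X" and Y: "is_autom C Y"
    and Acc_X: "Acc X = {ax}" and Start_Y: "Start Y = {sy}" and join: "Over X ax = Over Y sy"
begin

abbreviation cls :: "'e + 'e \<Rightarrow> ('e + 'e) set" where
  "cls z \<equiv> glue_rel C X Y `` {z}"

lemma ax_in: "ax \<in> Elts X" and sy_in: "sy \<in> Elts Y"
  using Acc_X Start_Y aut_acc[OF X] aut_start[OF Y] by auto

lemma Inl_in: "x \<in> Elts X \<Longrightarrow> Inl x \<in> glue_dom X Y"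
  and Inr_in: "y \<in> Elts Y \<Longrightarrow> Inr y \<in> glue_dom X Y"
  by (auto simp: glue_dom_def)

lemma glue_gen_eq:
  "glue_gen C X Y = {(Inl (Act X ax f), Inr (Act Y sy f)) | f. f \<in> Mor C \<and> Cod C f = Over X ax}"
  unfolding glue_gen_def Acc_X Start_Y tgt_def by simp

lemma glue_gen_act:
  assumes "(z, z') \<in> glue_gen C X Y" "g \<in> Mor C" "Cod C g = glue_ov X Y z"
  shows "(glue_ac X Y z g, glue_ac X Y z' g) \<in> glue_gen C X Y"
proof -
  obtain f where f: "f \<in> Mor C" "Cod C f = Over X ax" "z = Inl (Act X ax f)" "z' = Inr (Act Y sy f)"
    using assms(1) unfolding glue_gen_eq by blast
  have g: "Cod C g = Dom C f" using assms(3) f aut_act[OF X ax_in f(1)] by (simp add: glue_ov_def)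
  have "Act X (Act X ax f) g = Act X ax (Comp C f g)" "Act Y (Act Y sy f) g = Act Y sy (Comp C f g)"
    using aut_act_comp[OF X ax_in f(1) assms(2) f(2) g] aut_act_comp[OF Y sy_in f(1) assms(2) _ g] f(2) join
    by simp_all
  moreover have "Comp C f g \<in> Mor C" "Cod C (Comp C f g) = Over X ax"
    using cat_comp[OF cat assms(2) f(1) g] f by auto
  ultimately show ?thesis unfolding glue_gen_eq using f by (auto simp: glue_ac_def)
qed

sublocale Q: quotient_presheaf C "glue_dom X Y" "glue_ov X Y" "glue_ac X Y" "glue_gen C X Y"
proof
  show "is_category C" by (rule cat)
  fix z f g
  assume z: "z \<in> glue_dom X Y"
  then show "glue_ov X Y z \<in> Ob C" "glue_ac X Y z (Idm C (glue_ov X Y z)) = z"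
    using aut_ob[OF X] aut_ob[OF Y] aut_act_id[OF X] aut_act_id[OF Y]
    by (auto simp: glue_dom_def glue_ov_def glue_ac_def)
  assume f: "f \<in> Mor C" "Cod C f = glue_ov X Y z"
  with z show "glue_ac X Y z f \<in> glue_dom X Y" "glue_ov X Y (glue_ac X Y z f) = Dom C f"
    using aut_act[OF X] aut_act[OF Y] by (auto simp: glue_dom_def glue_ov_def glue_ac_def)
  assume "g \<in> Mor C" "Cod C g = Dom C f"
  with z f show "glue_ac X Y (glue_ac X Y z f) g = glue_ac X Y z (Comp C f g)"
    using aut_act_comp[OF X] aut_act_comp[OF Y] by (auto simp: glue_dom_def glue_ov_def glue_ac_def)
next
  fix z z' assume "(z, z') \<in> glue_gen C X Y"
  then obtain f where f: "f \<in> Mor C" "Cod C f = Over X ax" "z = Inl (Act X ax f)" "z' = Inr (Act Y sy f)"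
    unfolding glue_gen_eq by blast
  then show "glue_ov X Y z = glue_ov X Y z'"
    using aut_act[OF X ax_in f(1)] aut_act[OF Y sy_in f(1)] join by (simp add: glue_ov_def)
qed (rule glue_gen_act)

lemma cls_eq: "cls z = Q.E `` {z}"
  by (simp add: glue_rel_eq)

lemma glue_autom: "is_autom C (glue C X Y)"
  unfolding glue_eq_quot_autom
  by (rule Q.quot_autom_autom)
    (use aut_start[OF X] aut_acc[OF Y] in \<open>auto simp: cls_eq intro!: Q.class_in_quotient Inl_in Inr_in\<close>)

lemma Inl_pmor: "pmor C X (glue C X Y) (\<lambda>x. cls (Inl x))"
  unfolding pmor_def glue_eq_quot_autom Q.Elts_quot_autom cls_eq
  using Q.class_in_quotient[OF Inl_in] Q.Over_class[OF Inl_in] Q.Act_class[OF Inl_in]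
  by (simp add: glue_ov_def glue_ac_def)

lemma Inr_pmor: "pmor C Y (glue C X Y) (\<lambda>y. cls (Inr y))"
  unfolding pmor_def glue_eq_quot_autom Q.Elts_quot_autom cls_eq
  using Q.class_in_quotient[OF Inr_in] Q.Over_class[OF Inr_in] Q.Act_class[OF Inr_in]
  by (simp add: glue_ov_def glue_ac_def)

lemma cls_join: "cls (Inl ax) = cls (Inr sy)"
proof -
  have "Idm C (Over X ax) \<in> Mor C" "Cod C (Idm C (Over X ax)) = Over X ax"
    using cat_id[OF cat] aut_ob[OF X ax_in] by auto
  then have "(Inl (Act X ax (Idm C (Over X ax))), Inr (Act Y sy (Idm C (Over X ax)))) \<in> glue_gen C X Y"
    unfolding glue_gen_eq by blast
  then have "(Inl ax, Inr sy) \<in> glue_gen C X Y"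
    using aut_act_id[OF X ax_in] aut_act_id[OF Y sy_in] join by simp
  then show ?thesis unfolding cls_eq using Q.related_class_eq Inl_in[OF ax_in] Inr_in[OF sy_in] by blast
qed

lemma glue_univ:
  assumes a: "pmor C X W a" and b: "pmor C Y W b" and ab: "a ax = b sy"
  obtains u where "pmor C (glue C X Y) W u"
    and "\<And>x. x \<in> Elts X \<Longrightarrow> u (cls (Inl x)) = a x" and "\<And>y. y \<in> Elts Y \<Longrightarrow> u (cls (Inr y)) = b y"
proof -
  define v where "v = case_sum a b"
  have v_elts: "v z \<in> Elts W \<and> Over W (v z) = glue_ov X Y z" if "z \<in> glue_dom X Y" for z
    using that pmorD[OF a] pmorD[OF b] by (auto simp: v_def glue_dom_def glue_ov_def)
  have v_act: "v (glue_ac X Y z f) = Act W (v z) f"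
    if "z \<in> glue_dom X Y" "f \<in> Mor C" "Cod C f = glue_ov X Y z" for z f
    using that pmor_act[OF a] pmor_act[OF b] by (auto simp: v_def glue_dom_def glue_ov_def glue_ac_def)
  have v_gen: "v z = v z'" if gen: "(z, z') \<in> glue_gen C X Y" for z z'
  proof -
    obtain f where f: "f \<in> Mor C" "Cod C f = Over X ax" "z = Inl (Act X ax f)" "z' = Inr (Act Y sy f)"
      using gen unfolding glue_gen_eq by blast
    then show ?thesis using pmor_act[OF a ax_in f(1)] pmor_act[OF b sy_in f(1)] ab join by (simp add: v_def)
  qed
  show ?thesis
  proof (rule that)
    show "pmor C (glue C X Y) W (\<lambda>c. v (SOME z. z \<in> c))"
      unfolding glue_eq_quot_autom by (rule Q.quot_autom_univ(1)[OF v_elts v_act v_gen])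
    have v_cls: "v (SOME z. z \<in> cls z0) = v z0" if "z0 \<in> glue_dom X Y" for z0
      unfolding cls_eq by (rule Q.quot_autom_univ(2)[OF v_elts v_act v_gen that])
    show "v (SOME z. z \<in> cls (Inl x)) = a x" if "x \<in> Elts X" for x
      using v_cls[OF Inl_in[OF that]] by (simp add: v_def)
    show "v (SOME z. z \<in> cls (Inr y)) = b y" if "y \<in> Elts Y" for y
      using v_cls[OF Inr_in[OF that]] by (simp add: v_def)
  qed
qed

lemma glue_amor:
  assumes a: "pmor C X W a" and b: "pmor C Y W b" and ab: "a ax = b sy"
    and "a ` Start X \<subseteq> Start W" and "b ` Acc Y \<subseteq> Acc W"
  shows "aleq C (glue C X Y) W"
proof -
  obtain u where u: "pmor C (glue C X Y) W u"
    "\<And>x. x \<in> Elts X \<Longrightarrow> u (cls (Inl x)) = a x" "\<And>y. y \<in> Elts Y \<Longrightarrow> u (cls (Inr y)) = b y"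
    using glue_univ[OF a b ab] by blast
  have "u ` Start (glue C X Y) \<subseteq> Start W" "u ` Acc (glue C X Y) \<subseteq> Acc W"
    using assms(4,5) u(2,3) aut_start[OF X] aut_acc[OF Y] unfolding Start_glue Acc_glue
    by (auto simp: image_subset_iff subset_iff)
  then show ?thesis unfolding aleq_def amor_iff_pmor using u(1) by blast
qed

end

definition simple_autom :: "('o,'m,'x) dcat_scheme \<Rightarrow> ('o,'m,'e) autom \<Rightarrow> bool" where
  "simple_autom C X \<longleftrightarrow> is_autom C X \<and> (\<exists>s. Start X = {s}) \<and> (\<exists>a. Acc X = {a})"

lemma simple_automE:
  assumes "simple_autom C X"
  obtains s a where "is_autom C X" "Start X = {s}" "Acc X = {a}" "s \<in> Elts X" "a \<in> Elts X"
    "src X = Over X s" "tgt X = Over X a"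
  using assms aut_start aut_acc unfolding simple_autom_def src_def tgt_def by fastforce

lemma gluingI:
  assumes "is_category C" "simple_autom C X" "simple_autom C Y" "tgt X = src Y"
    and "Acc X = {ax}" "Start Y = {sy}"
  shows "gluing C X Y ax sy"
  using assms unfolding gluing_def simple_autom_def src_def tgt_def by auto

lemma aleq_src_tgt:
  assumes X: "simple_autom C X" and Y: "simple_autom C Y" and "aleq C X Y"
  shows "src X = src Y" "tgt X = tgt Y"
proof -
  obtain h where h: "amor C X Y h" using assms(3) unfolding aleq_def by blast
  obtain sx ax where x: "Start X = {sx}" "Acc X = {ax}" "sx \<in> Elts X" "ax \<in> Elts X"
    "src X = Over X sx" "tgt X = Over X ax"
    using simple_automE[OF X] by metis
  obtain sy ay where y: "Start Y = {sy}" "Acc Y = {ay}" "src Y = Over Y sy" "tgt Y = Over Y ay"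
    using simple_automE[OF Y] by metis
  have "h sx = sy" "h ax = ay" using h x y amor_start_singleton amor_acc_singleton by metis+
  then show "src X = src Y" "tgt X = tgt Y"
    using h x y unfolding amor_iff_pmor using pmor_over by metis+
qed

lemma glue_mono:
  assumes cat: "is_category C"
    and X: "simple_autom C X" and Y: "simple_autom C Y" and XY: "tgt X = src Y"
    and X': "simple_autom C X'" and Y': "simple_autom C Y'" and XY': "tgt X' = src Y'"
    and "aleq C X X'" "aleq C Y Y'"
  shows "aleq C (glue C X Y) (glue C X' Y')"
proof -
  obtain f g where f: "amor C X X' f" and g: "amor C Y Y' g" using assms(8,9) unfolding aleq_def by blast
  obtain ax ax' sy sy' where a: "Acc X = {ax}" "Acc X' = {ax'}" and s: "Start Y = {sy}" "Start Y' = {sy'}"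
    using X X' Y Y' unfolding simple_autom_def by blast
  interpret G: gluing C X Y ax sy using gluingI[OF cat X Y XY a(1) s(1)] .
  interpret G': gluing C X' Y' ax' sy' using gluingI[OF cat X' Y' XY' a(2) s(2)] .
  show ?thesis
  proof (rule G.glue_amor)
    show "pmor C X (glue C X' Y') (\<lambda>x. G'.cls (Inl (f x)))"
      using pmor_comp[OF _ G'.Inl_pmor] f amor_iff_pmor by blast
    show "pmor C Y (glue C X' Y') (\<lambda>y. G'.cls (Inr (g y)))"
      using pmor_comp[OF _ G'.Inr_pmor] g amor_iff_pmor by blast
    show "G'.cls (Inl (f ax)) = G'.cls (Inr (g sy))"
      using amor_acc_singleton[OF f a] amor_start_singleton[OF g s] G'.cls_join by simp
    show "(\<lambda>x. G'.cls (Inl (f x))) ` Start X \<subseteq> Start (glue C X' Y')"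
      using f unfolding amor_def Start_glue by blast
    show "(\<lambda>y. G'.cls (Inr (g y))) ` Acc Y \<subseteq> Acc (glue C X' Y')"
      using g unfolding amor_def Acc_glue by blast
  qed
qed

section \<open>Concatenation of paths\<close>

definition join_ob :: "lgen list \<Rightarrow> (nat \<Rightarrow> 'o) \<Rightarrow> (nat \<Rightarrow> 'o) \<Rightarrow> nat \<Rightarrow> 'o" where
  "join_ob w1 ob1 ob2 = (\<lambda>i. if i \<le> length w1 then ob1 i else ob2 (i - length w1))"

definition join_mo :: "lgen list \<Rightarrow> (nat \<Rightarrow> 'm) \<Rightarrow> (nat \<Rightarrow> 'm) \<Rightarrow> nat \<Rightarrow> 'm" where
  "join_mo w1 mo1 mo2 = (\<lambda>k. if k < length w1 then mo1 k else mo2 (k - length w1))"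

definition path_append :: "('o,'m) path \<Rightarrow> ('o,'m) path \<Rightarrow> ('o,'m) path" where
  "path_append p q = (case (p, q) of ((w1, ob1, mo1), (w2, ob2, mo2)) \<Rightarrow>
     (w1 @ w2, join_ob w1 ob1 ob2, join_mo w1 mo1 mo2))"

lemma path_append_eq:
  "path_append (w1, ob1, mo1) (w2, ob2, mo2) = (w1 @ w2, join_ob w1 ob1 ob2, join_mo w1 mo1 mo2)"
  by (simp add: path_append_def)

lemma path_append_assoc: "path_append (path_append p q) r = path_append p (path_append q r)"
  by (cases p, cases q, cases r)
    (simp add: path_append_def join_ob_def join_mo_def fun_eq_iff diff_diff_add, arith)

lemma join_index_left:
  "k < length xs \<Longrightarrow> (xs @ ys)!k = xs!k \<and> join_mo xs mo mo' k = mo k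
     \<and> join_ob xs ob ob' k = ob k \<and> join_ob xs ob ob' (Suc k) = ob (Suc k)"
  by (simp add: join_ob_def join_mo_def nth_append)

text \<open>The join condition makes the two candidate vertices at position \<open>length w1\<close> agree.\<close>

lemma join_index_right:
  "ob (length xs) = ob' 0 \<Longrightarrow> (xs @ ys)!(k + length xs) = ys!k \<and> join_mo xs mo mo' (k + length xs) = mo' k
     \<and> join_ob xs ob ob' (k + length xs) = ob' k \<and> join_ob xs ob ob' (Suc (k + length xs)) = ob' (Suc k)"
  by (cases k) (auto simp: join_ob_def join_mo_def nth_append)

lemma less_append_cases:
  assumes "k < length (xs @ ys)"
  obtains "k < length xs" | j where "k = j + length xs" "j < length ys"
proof (cases "k < length xs")
  case False
  then show ?thesis using assms that(2)[of "k - length xs"] by simp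
qed

lemma le_append_cases:
  assumes "i \<le> length (xs @ ys)"
  obtains "i \<le> length xs" | j where "i = j + length xs" "j \<le> length ys"
proof (cases "i \<le> length xs")
  case False
  then show ?thesis using assms that(2)[of "i - length xs"] by simp
qed

definition path_step :: "('o,'m,'x) dcat_scheme \<Rightarrow> lgen \<Rightarrow> 'm \<Rightarrow> 'o \<Rightarrow> 'o \<Rightarrow> bool" where
  "path_step C l m a b \<longleftrightarrow>
     (l = S \<longrightarrow> m \<in> Plus C \<and> Dom C m = a \<and> Cod C m = b)
   \<and> (l = T \<longrightarrow> m \<in> Minus C \<and> Dom C m = b \<and> Cod C m = a)
   \<and> (l = I \<longrightarrow> m \<in> Plus C \<and> Dom C m = a \<and> Cod C m = b \<and> (\<exists>g. inverse_pair C m g \<and> g \<in> Minus C))"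

lemma is_path_iff: "is_path C (w, ob, mo) \<longleftrightarrow>
    (\<forall>i\<le>length w. ob i \<in> Ob C) \<and> (\<forall>k<length w. path_step C (w!k) (mo k) (ob k) (ob (Suc k)))"
  unfolding is_path_def path_step_def by simp

lemma is_path_append:
  assumes p1: "is_path C (w1, ob1, mo1)" and p2: "is_path C (w2, ob2, mo2)" and j: "ob1 (length w1) = ob2 0"
  shows "is_path C (w1 @ w2, join_ob w1 ob1 ob2, join_mo w1 mo1 mo2)"
  unfolding is_path_iff
proof (rule conjI; intro allI impI)
  fix i assume "i \<le> length (w1 @ w2)"
  then show "join_ob w1 ob1 ob2 i \<in> Ob C"
    by (cases rule: le_append_cases) (use p1 p2 in \<open>auto simp: is_path_iff join_ob_def\<close>)
next
  fix k assume "k < length (w1 @ w2)"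
  then show "path_step C ((w1 @ w2)!k) (join_mo w1 mo1 mo2 k) (join_ob w1 ob1 ob2 k) (join_ob w1 ob1 ob2 (Suc k))"
  proof (cases rule: less_append_cases)
    case 1
    then show ?thesis using p1 join_index_left[OF 1, of w2 mo1 mo2 ob1 ob2] by (simp add: is_path_iff)
  next
    case (2 i)
    then show ?thesis
      using p2 join_index_right[where ob = ob1 and xs = w1 and ob' = ob2 and ys = w2 and k = i and mo = mo1 and mo' = mo2, OF j]
      by (simp add: is_path_iff)
  qed
qed

lemma path_lift_append:
  assumes x1: "path_lift C w1 ob1 mo1 W x1" and x2: "path_lift C w2 ob2 mo2 W x2"
    and jx: "x1 (length w1) = x2 0" and j: "ob1 (length w1) = ob2 0"
  shows "path_lift C (w1 @ w2) (join_ob w1 ob1 ob2) (join_mo w1 mo1 mo2) W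
    (\<lambda>i. if i \<le> length w1 then x1 i else x2 (i - length w1))" (is "path_lift C _ _ _ W ?x")
  unfolding path_lift_def
proof (rule conjI; intro allI impI)
  have x_right: "?x (i + length w1) = x2 i" for i using jx by (cases i) auto
  fix i assume "i \<le> length (w1 @ w2)"
  then show "?x i \<in> Elts W \<and> Over W (?x i) = join_ob w1 ob1 ob2 i"
  proof (cases rule: le_append_cases)
    case 1
    then show ?thesis using x1 by (simp add: path_lift_def join_ob_def)
  next
    case (2 i')
    then show ?thesis using x2 x_right[of i'] j by (cases i') (auto simp: path_lift_def join_ob_def)
  qed
next
  fix k assume "k < length (w1 @ w2)"
  then show "lift_step W ((w1 @ w2)!k) (join_mo w1 mo1 mo2 k) (?x k) (?x (Suc k))"
  proof (cases rule: less_append_cases)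
    case 1
    then show ?thesis using x1 join_index_left[OF 1, of w2 mo1 mo2 ob1 ob2] by (simp add: path_lift_def)
  next
    case (2 i)
    have x_eq: "?x (i + length w1) = x2 i" "?x (Suc (i + length w1)) = x2 (Suc i)"
      using jx by (cases i) auto
    have "lift_step W (w2!i) (mo2 i) (x2 i) (x2 (Suc i))" using x2 2 by (simp add: path_lift_def)
    then show ?thesis unfolding 2(1)
      using join_index_right[where ob = ob1 and xs = w1 and ob' = ob2 and ys = w2 and k = i and mo = mo1 and mo' = mo2, OF j]
      by (simp only: x_eq)
  qed
qed

lemma path_lift_append_left:
  assumes x: "path_lift C (w1 @ w2) (join_ob w1 ob1 ob2) (join_mo w1 mo1 mo2) W x"
  shows "path_lift C w1 ob1 mo1 W x"
  unfolding path_lift_def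
proof (rule conjI; intro allI impI)
  fix i assume "i \<le> length w1"
  then show "x i \<in> Elts W \<and> Over W (x i) = ob1 i" using x by (simp add: path_lift_def join_ob_def)
next
  fix k assume k: "k < length w1"
  then have "lift_step W ((w1 @ w2)!k) (join_mo w1 mo1 mo2 k) (x k) (x (Suc k))"
    using x by (simp add: path_lift_def)
  then show "lift_step W (w1!k) (mo1 k) (x k) (x (Suc k))"
    using join_index_left[OF k, of w2 mo1 mo2 ob1 ob2] by simp
qed

lemma path_lift_append_right:
  assumes x: "path_lift C (w1 @ w2) (join_ob w1 ob1 ob2) (join_mo w1 mo1 mo2) W x"
    and j: "ob1 (length w1) = ob2 0"
  shows "path_lift C w2 ob2 mo2 W (\<lambda>i. x (i + length w1))"
  unfolding path_lift_def
proof (rule conjI; intro allI impI)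
  fix i assume "i \<le> length w2"
  then show "x (i + length w1) \<in> Elts W \<and> Over W (x (i + length w1)) = ob2 i"
    using x join_index_right[where ob = ob1 and xs = w1 and ob' = ob2 and ys = w2 and k = i, OF j]
    unfolding path_lift_def by auto
next
  fix k assume "k < length w2"
  then have "lift_step W ((w1 @ w2)!(k + length w1)) (join_mo w1 mo1 mo2 (k + length w1))
      (x (k + length w1)) (x (Suc (k + length w1)))"
    using x by (simp add: path_lift_def)
  then show "lift_step W (w2!k) (mo2 k) (x (k + length w1)) (x (Suc k + length w1))"
    using join_index_right[where ob = ob1 and xs = w1 and ob' = ob2 and ys = w2 and k = k and mo = mo1 and mo' = mo2, OF j]
    by simp
qed

lemma track_gluing:
  assumes dc: "is_dcat C" and p1: "is_path C (w1, ob1, mo1)" and p2: "is_path C (w2, ob2, mo2)"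
    and j: "ob1 (length w1) = ob2 0"
  shows "gluing C (track C (w1, ob1, mo1)) (track C (w2, ob2, mo2))
    (track_elem C (w1, ob1, mo1) (length w1)) (track_elem C (w2, ob2, mo2) 0)"
  unfolding gluing_def
  using is_dcat_category[OF dc] track_autom[OF dc p1] track_autom[OF dc p2]
    track_elem_in_track(2)[OF dc p1, of "length w1"] track_elem_in_track(2)[OF dc p2, of 0] j
  by (simp add: Acc_track Start_track)

lemma track_append_aleq_glue:
  assumes dc: "is_dcat C" and p1: "is_path C (w1, ob1, mo1)" and p2: "is_path C (w2, ob2, mo2)"
    and j: "ob1 (length w1) = ob2 0"
  shows "aleq C (track C (w1 @ w2, join_ob w1 ob1 ob2, join_mo w1 mo1 mo2))
    (glue C (track C (w1, ob1, mo1)) (track C (w2, ob2, mo2)))"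
proof -
  interpret G: gluing C "track C (w1, ob1, mo1)" "track C (w2, ob2, mo2)"
    "track_elem C (w1, ob1, mo1) (length w1)" "track_elem C (w2, ob2, mo2) 0"
    using track_gluing[OF assms] .
  let ?x1 = "\<lambda>i. G.cls (Inl (track_elem C (w1, ob1, mo1) i))"
  let ?x2 = "\<lambda>i. G.cls (Inr (track_elem C (w2, ob2, mo2) i))"
  let ?x = "\<lambda>i. if i \<le> length w1 then ?x1 i else ?x2 (i - length w1)"
  let ?G = "glue C (track C (w1, ob1, mo1)) (track C (w2, ob2, mo2))"
  have "path_lift C (w1 @ w2) (join_ob w1 ob1 ob2) (join_mo w1 mo1 mo2) ?G ?x"
    using path_lift_append[OF path_lift_pmor[OF dc p1 G.Inl_pmor track_elem_lift[OF dc p1]]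
        path_lift_pmor[OF dc p2 G.Inr_pmor track_elem_lift[OF dc p2]] G.cls_join j] .
  moreover have "?x 0 \<in> Start ?G"
    by (simp add: Start_glue Start_track)
  moreover have "?x (length (w1 @ w2)) = ?x2 (length w2)"
    using G.cls_join by (cases "w2 = []") auto
  then have "?x (length (w1 @ w2)) \<in> Acc ?G"
    by (simp add: Acc_glue Acc_track)
  ultimately show ?thesis
    using track_amor[OF dc is_path_append[OF p1 p2 j] G.glue_autom] by blast
qed

lemma glue_aleq_track_append:
  assumes dc: "is_dcat C" and p1: "is_path C (w1, ob1, mo1)" and p2: "is_path C (w2, ob2, mo2)"
    and j: "ob1 (length w1) = ob2 0"
  shows "aleq C (glue C (track C (w1, ob1, mo1)) (track C (w2, ob2, mo2)))
    (track C (w1 @ w2, join_ob w1 ob1 ob2, join_mo w1 mo1 mo2))"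
proof -
  interpret G: gluing C "track C (w1, ob1, mo1)" "track C (w2, ob2, mo2)"
    "track_elem C (w1, ob1, mo1) (length w1)" "track_elem C (w2, ob2, mo2) 0"
    using track_gluing[OF assms] .
  let ?q = "(w1 @ w2, join_ob w1 ob1 ob2, join_mo w1 mo1 mo2)"
  have q: "is_path C ?q" using is_path_append[OF p1 p2 j] .
  note lift_q = track_elem_lift[OF dc q]
  obtain s1 where s1: "pmor C (track C (w1, ob1, mo1)) (track C ?q) s1"
    "\<And>i. i \<le> length w1 \<Longrightarrow> s1 (track_elem C (w1, ob1, mo1) i) = track_elem C ?q i"
    using track_univ[OF dc p1 track_autom[OF dc q] path_lift_append_left[OF lift_q]] by blast
  obtain s2 where s2: "pmor C (track C (w2, ob2, mo2)) (track C ?q) s2"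
    "\<And>i. i \<le> length w2 \<Longrightarrow> s2 (track_elem C (w2, ob2, mo2) i) = track_elem C ?q (i + length w1)"
    using track_univ[OF dc p2 track_autom[OF dc q] path_lift_append_right[OF lift_q j]] by blast
  show ?thesis
  proof (rule G.glue_amor[OF s1(1) s2(1)])
    show "s1 (track_elem C (w1, ob1, mo1) (length w1)) = s2 (track_elem C (w2, ob2, mo2) 0)"
      using s1(2) s2(2) by simp
    show "s1 ` Start (track C (w1, ob1, mo1)) \<subseteq> Start (track C ?q)"
      using s1(2) by (simp add: Start_track)
    show "s2 ` Acc (track C (w2, ob2, mo2)) \<subseteq> Acc (track C ?q)"
      using s2(2) by (simp add: Acc_track add.commute)
  qed
qed

lemma track_append:
  assumes dc: "is_dcat C" and p: "is_path C p" and q: "is_path C q"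
    and pq: "tgt (track C p) = src (track C q)"
  shows "is_path C (path_append p q)"
    and "aleq C (track C (path_append p q)) (glue C (track C p) (track C q))"
    and "aleq C (glue C (track C p) (track C q)) (track C (path_append p q))"
    and "src (track C (path_append p q)) = src (track C p)"
    and "tgt (track C (path_append p q)) = tgt (track C q)"
proof -
  obtain w1 ob1 mo1 w2 ob2 mo2 where pq_eq: "p = (w1, ob1, mo1)" "q = (w2, ob2, mo2)" by (cases p, cases q)
  note p = p[unfolded pq_eq] and q = q[unfolded pq_eq]
  have j: "ob1 (length w1) = ob2 0" using pq src_tgt_track[OF dc p] src_tgt_track[OF dc q] by (simp add: pq_eq)
  note r = is_path_append[OF p q j]
  show "is_path C (path_append p q)" using r by (simp add: pq_eq path_append_eq)
  show "aleq C (track C (path_append p q)) (glue C (track C p) (track C q))"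
    using track_append_aleq_glue[OF dc p q j] by (simp add: pq_eq path_append_eq)
  show "aleq C (glue C (track C p) (track C q)) (track C (path_append p q))"
    using glue_aleq_track_append[OF dc p q j] by (simp add: pq_eq path_append_eq)
  show "src (track C (path_append p q)) = src (track C p)"
    "tgt (track C (path_append p q)) = tgt (track C q)"
    using src_tgt_track[OF dc r] src_tgt_track[OF dc p] src_tgt_track[OF dc q] j
    by (simp_all add: pq_eq path_append_eq join_ob_def)
qed

section \<open>Products of languages\<close>

lemma track_simple:
  assumes "is_dcat C" "is_track C G"
  shows "simple_autom C G"
proof -
  obtain w ob mo h k where "is_path C (w, ob, mo)" "is_autom C G"
    "amor C G (track C (w, ob, mo)) h" "amor C (track C (w, ob, mo)) G k"
    "Start G = {k (track_elem C (w, ob, mo) 0)}" "Acc G = {k (track_elem C (w, ob, mo) (length w))}"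
    by (rule is_trackE[OF assms])
  then show ?thesis unfolding simple_autom_def by blast
qed

lemma track_equiv_path:
  assumes dc: "is_dcat C" and G: "is_track C G"
  obtains p where "is_path C p" "aleq C G (track C p)" "aleq C (track C p) G"
  using is_trackE[OF dc G] unfolding aleq_def by metis

lemma aleq_tracks_src_tgt:
  assumes "is_dcat C" "is_track C X" "is_track C Y" "aleq C X Y"
  shows "src X = src Y" "tgt X = tgt Y"
  using aleq_src_tgt[OF track_simple track_simple] assms by blast+

lemma is_langD:
  assumes "is_lang C L"
  shows lang_track: "G \<in> L \<Longrightarrow> is_track C G"
    and lang_down_closed: "G \<in> L \<Longrightarrow> is_track C D \<Longrightarrow> aleq C D G \<Longrightarrow> D \<in> L"
  using assms unfolding is_lang_def by blast+

lemma down_lang: "is_lang C (down C A)"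
  unfolding is_lang_def down_def using aleq_trans by blast

lemma ltimes_lang: "is_lang C (ltimes C L M)"
  unfolding ltimes_def by (rule down_lang)

lemma ltimesI:
  "is_track C Z \<Longrightarrow> G \<in> L \<Longrightarrow> D \<in> M \<Longrightarrow> tgt G = src D \<Longrightarrow> aleq C Z (glue C G D) \<Longrightarrow> Z \<in> ltimes C L M"
  unfolding ltimes_def down_def by blast

lemma ltimesE:
  assumes "Z \<in> ltimes C L M"
  obtains G D where "is_track C Z" "G \<in> L" "D \<in> M" "tgt G = src D" "aleq C Z (glue C G D)"
  using assms unfolding ltimes_def down_def by blast

lemma ltimes_mono: "L \<subseteq> L' \<Longrightarrow> M \<subseteq> M' \<Longrightarrow> ltimes C L M \<subseteq> ltimes C L' M'"
  unfolding ltimes_def down_def by blast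

lemma track_append_in_ltimes:
  assumes dc: "is_dcat C" and "is_path C p" "is_path C q" "tgt (track C p) = src (track C q)"
    and "track C p \<in> L" "track C q \<in> M"
  shows "track C (path_append p q) \<in> ltimes C L M"
proof (rule ltimesI)
  show "is_track C (track C (path_append p q))"
    by (rule track_is_track[OF dc track_append(1)[OF dc assms(2-4)]])
  show "aleq C (track C (path_append p q)) (glue C (track C p) (track C q))"
    by (rule track_append(2)[OF dc assms(2-4)])
qed (fact assms)+

lemma ltimes_path_decomp:
  assumes dc: "is_dcat C" and L: "is_lang C L" and M: "is_lang C M" and Z: "Z \<in> ltimes C L M"
  obtains p q where "is_path C p" "is_path C q" "tgt (track C p) = src (track C q)"
    "track C p \<in> L" "track C q \<in> M" "aleq C Z (track C (path_append p q))"
proof -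
  have cat: "is_category C" using dc by (rule is_dcat_category)
  obtain G D where G: "G \<in> L" and D: "D \<in> M" and GD: "tgt G = src D" and Z_GD: "aleq C Z (glue C G D)"
    using Z by (rule ltimesE)
  note tG = lang_track[OF L G] and tD = lang_track[OF M D]
  obtain p where p: "is_path C p" "aleq C G (track C p)" "aleq C (track C p) G"
    using track_equiv_path[OF dc tG] .
  obtain q where q: "is_path C q" "aleq C D (track C q)" "aleq C (track C q) D"
    using track_equiv_path[OF dc tD] .
  note tp = track_is_track[OF dc p(1)] and tq = track_is_track[OF dc q(1)]
  have pq: "tgt (track C p) = src (track C q)"
    using GD aleq_tracks_src_tgt[OF dc tG tp p(2)] aleq_tracks_src_tgt[OF dc tD tq q(2)] by simp
  have "aleq C (glue C G D) (glue C (track C p) (track C q))"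
    using glue_mono[OF cat track_simple[OF dc tG] track_simple[OF dc tD] GD
        track_simple[OF dc tp] track_simple[OF dc tq] pq p(2) q(2)] .
  then have "aleq C Z (track C (path_append p q))"
    using aleq_trans[OF Z_GD] aleq_trans track_append(3)[OF dc p(1) q(1) pq] by blast
  with p(1) q(1) pq show ?thesis
    using that lang_down_closed[OF L G tp p(3)] lang_down_closed[OF M D tq q(3)] by blast
qed

lemma track_append_mono:
  assumes dc: "is_dcat C" and p: "is_path C p" "is_path C p'" and q: "is_path C q" "is_path C q'"
    and pq: "tgt (track C p) = src (track C q)" "tgt (track C p') = src (track C q')"
    and "aleq C (track C p) (track C p')" "aleq C (track C q) (track C q')"
  shows "aleq C (track C (path_append p q)) (track C (path_append p' q'))"
proof -
  have simple: "simple_autom C (track C r)" if "is_path C r" for r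
    using track_simple[OF dc track_is_track[OF dc that]] .
  have "aleq C (glue C (track C p) (track C q)) (glue C (track C p') (track C q'))"
    using glue_mono[OF is_dcat_category[OF dc] simple[OF p(1)] simple[OF q(1)] pq(1)
        simple[OF p(2)] simple[OF q(2)] pq(2) assms(8,9)] .
  then show ?thesis
    using aleq_trans[OF track_append(2)[OF dc p(1) q(1) pq(1)]]
      aleq_trans[OF _ track_append(3)[OF dc p(2) q(2) pq(2)]] by blast
qed

lemma ltimes_assoc_subset:
  assumes dc: "is_dcat C" and L: "is_lang C L" and M: "is_lang C M" and N: "is_lang C N"
  shows "ltimes C (ltimes C L M) N \<subseteq> ltimes C L (ltimes C M N)"
proof
  fix Z assume Z: "Z \<in> ltimes C (ltimes C L M) N"
  obtain r p3 where r: "is_path C r" and p3: "is_path C p3" and rp3: "tgt (track C r) = src (track C p3)"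
    and LM: "track C r \<in> ltimes C L M" and N3: "track C p3 \<in> N" and Z_r3: "aleq C Z (track C (path_append r p3))"
    using ltimes_path_decomp[OF dc ltimes_lang N Z] .
  obtain p1 p2 where p1: "is_path C p1" and p2: "is_path C p2" and p12: "tgt (track C p1) = src (track C p2)"
    and L1: "track C p1 \<in> L" and M2: "track C p2 \<in> M" and r_12: "aleq C (track C r) (track C (path_append p1 p2))"
    using ltimes_path_decomp[OF dc L M LM] .
  note p12_path = track_append[OF dc p1 p2 p12]
  have p23: "tgt (track C p2) = src (track C p3)"
    using aleq_tracks_src_tgt(2)[OF dc track_is_track[OF dc r] track_is_track[OF dc p12_path(1)] r_12]
      p12_path(5) rp3 by simp
  note p23_path = track_append[OF dc p2 p3 p23]
  have "aleq C (track C (path_append r p3)) (track C (path_append (path_append p1 p2) p3))"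
    using track_append_mono[OF dc r p12_path(1) p3 p3 rp3 _ r_12 aleq_refl] p12_path(5) p23 by simp
  then have "aleq C Z (track C (path_append p1 (path_append p2 p3)))"
    using aleq_trans[OF Z_r3] by (simp add: path_append_assoc)
  moreover have "track C (path_append p1 (path_append p2 p3)) \<in> ltimes C L (ltimes C M N)"
    using track_append_in_ltimes[OF dc p1 p23_path(1) _ L1 track_append_in_ltimes[OF dc p2 p3 p23 M2 N3]]
      p23_path(4) p12 by simp
  ultimately show "Z \<in> ltimes C L (ltimes C M N)"
    using lang_down_closed[OF ltimes_lang] lang_track[OF ltimes_lang Z] by blast
qed

lemma ltimes_assoc_supset:
  assumes dc: "is_dcat C" and L: "is_lang C L" and M: "is_lang C M" and N: "is_lang C N"
  shows "ltimes C L (ltimes C M N) \<subseteq> ltimes C (ltimes C L M) N"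
proof
  fix Z assume Z: "Z \<in> ltimes C L (ltimes C M N)"
  obtain p1 r where p1: "is_path C p1" and r: "is_path C r" and p1r: "tgt (track C p1) = src (track C r)"
    and L1: "track C p1 \<in> L" and MN: "track C r \<in> ltimes C M N" and Z_1r: "aleq C Z (track C (path_append p1 r))"
    using ltimes_path_decomp[OF dc L ltimes_lang Z] .
  obtain p2 p3 where p2: "is_path C p2" and p3: "is_path C p3" and p23: "tgt (track C p2) = src (track C p3)"
    and M2: "track C p2 \<in> M" and N3: "track C p3 \<in> N" and r_23: "aleq C (track C r) (track C (path_append p2 p3))"
    using ltimes_path_decomp[OF dc M N MN] .
  note p23_path = track_append[OF dc p2 p3 p23]
  have p12: "tgt (track C p1) = src (track C p2)"
    using aleq_tracks_src_tgt(1)[OF dc track_is_track[OF dc r] track_is_track[OF dc p23_path(1)] r_23]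
      p23_path(4) p1r by simp
  note p12_path = track_append[OF dc p1 p2 p12]
  have "aleq C (track C (path_append p1 r)) (track C (path_append p1 (path_append p2 p3)))"
    using track_append_mono[OF dc p1 p1 r p23_path(1) p1r _ aleq_refl r_23] p23_path(4) p12 by simp
  then have "aleq C Z (track C (path_append (path_append p1 p2) p3))"
    using aleq_trans[OF Z_1r] by (simp add: path_append_assoc)
  moreover have "track C (path_append (path_append p1 p2) p3) \<in> ltimes C (ltimes C L M) N"
    using track_append_in_ltimes[OF dc p12_path(1) p3 _ track_append_in_ltimes[OF dc p1 p2 p12 L1 M2] N3]
      p12_path(5) p23 by simp
  ultimately show "Z \<in> ltimes C (ltimes C L M) N"
    using lang_down_closed[OF ltimes_lang] lang_track[OF ltimes_lang Z] by blast
qed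

section \<open>The unit language and powers\<close>

lemma iota_simps:
  "Elts (iota C U) = {g \<in> Mor C. Cod C g = U}" "Over (iota C U) = Dom C" "Act (iota C U) = Comp C"
  "Start (iota C U) = {Idm C U}" "Acc (iota C U) = {Idm C U}"
  unfolding iota_def by simp_all

lemma iota_simple:
  assumes cat: "is_category C" and U: "U \<in> Ob C"
  shows "simple_autom C (iota C U)" "src (iota C U) = U"
proof -
  show "simple_autom C (iota C U)"
    unfolding simple_autom_def is_autom_def iota_simps using is_categoryD[OF cat] U by auto
  show "src (iota C U) = U" unfolding src_def iota_simps using cat_id[OF cat U] by simp
qed

context gluing
begin

text \<open>The retraction sends \<open>y\<close> to \<open>ax\<close> restricted along the image of \<open>y\<close> in \<open>\<iota>\<^sub>U\<close>.\<close>

lemma glue_aleq_right_unit: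
  assumes "aleq C Y (iota C (Over X ax))"
  shows "aleq C (glue C X Y) X"
proof -
  let ?U = "Over X ax"
  obtain h where h: "amor C Y (iota C ?U) h" using assms unfolding aleq_def by blast
  have h_elts: "h y \<in> Mor C" "Cod C (h y) = ?U" "Dom C (h y) = Over Y y" if "y \<in> Elts Y" for y
    using h that unfolding amor_def iota_simps by auto
  have h_ends: "h sy = Idm C ?U" "h ` Acc Y \<subseteq> {Idm C ?U}"
    using h Start_Y unfolding amor_def iota_simps by auto
  define b where "b = (\<lambda>y. Act X ax (h y))"
  have "pmor C Y X b"
    unfolding pmor_def b_def
  proof (intro conjI ballI impI)
    fix y assume y: "y \<in> Elts Y"
    show "Act X ax (h y) \<in> Elts X" "Over X (Act X ax (h y)) = Over Y y"
      using aut_act[OF X ax_in] h_elts[OF y] by auto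
    fix f assume f: "f \<in> Mor C" "Cod C f = Over Y y"
    have "h (Act Y y f) = Comp C (h y) f"
      using h y f unfolding amor_def iota_simps by auto
    then show "Act X ax (h (Act Y y f)) = Act X (Act X ax (h y)) f"
      using aut_act_comp[OF X ax_in h_elts(1)[OF y] f(1)] h_elts[OF y] f by simp
  qed
  moreover have "b sy = ax" "b ` Acc Y \<subseteq> Acc X"
    using h_ends aut_act_id[OF X ax_in] Acc_X unfolding b_def by auto
  ultimately show ?thesis
    using glue_amor[OF pmor_id, of b] by simp
qed

lemma aleq_glue_trivial:
  assumes "Acc Y = Start Y"
  shows "aleq C X (glue C X Y)"
  unfolding aleq_def amor_iff_pmor
  using Inl_pmor cls_join assms Start_Y Acc_X by (auto simp: Start_glue Acc_glue)

end

lemma trivial_path_in_one_lang: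
  assumes dc: "is_dcat C" and U: "U \<in> Ob C"
  shows "is_path C ([], \<lambda>_. U, mo)" "track C ([], \<lambda>_. U, mo) \<in> one_lang C"
proof -
  have cat: "is_category C" using dc by (rule is_dcat_category)
  show p: "is_path C ([], \<lambda>_. U, mo)" unfolding is_path_def using U by simp
  have "path_lift C [] (\<lambda>_. U) mo (iota C U) (\<lambda>_. Idm C U)"
    unfolding path_lift_def iota_simps using cat_id[OF cat U] by simp
  then have "aleq C (track C ([], \<lambda>_. U, mo)) (iota C U)"
    using track_amor[OF dc p iota_simple(1)[OF cat U, unfolded simple_autom_def, THEN conjunct1]]
    by (simp add: iota_simps)
  then show "track C ([], \<lambda>_. U, mo) \<in> one_lang C"
    unfolding one_lang_def down_def using track_is_track[OF dc p] U by blast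
qed

lemma ltimes_one_lang_subset:
  assumes dc: "is_dcat C" and L: "is_lang C L"
  shows "ltimes C L (one_lang C) \<subseteq> L"
proof
  have cat: "is_category C" using dc by (rule is_dcat_category)
  fix Z assume "Z \<in> ltimes C L (one_lang C)"
  then obtain G Y where Z: "is_track C Z" and G: "G \<in> L" and Y: "Y \<in> one_lang C"
    and GY: "tgt G = src Y" and Z_GY: "aleq C Z (glue C G Y)"
    by (rule ltimesE)
  obtain U where tY: "is_track C Y" and U: "U \<in> Ob C" and Y_U: "aleq C Y (iota C U)"
    using Y unfolding one_lang_def down_def by blast
  note G_simple = track_simple[OF dc lang_track[OF L G]] and Y_simple = track_simple[OF dc tY]
  obtain aG where aG: "Acc G = {aG}" using G_simple unfolding simple_autom_def by blast
  obtain sY where sY: "Start Y = {sY}" using Y_simple unfolding simple_autom_def by blast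
  interpret gluing C G Y aG sY using gluingI[OF cat G_simple Y_simple GY aG sY] .
  have "Over G aG = src Y" using GY aG by (simp add: tgt_def)
  also have "\<dots> = U"
    using aleq_src_tgt(1)[OF Y_simple iota_simple(1)[OF cat U] Y_U] iota_simple(2)[OF cat U] by simp
  finally have "aleq C (glue C G Y) G" using glue_aleq_right_unit Y_U by simp
  then show "Z \<in> L" using lang_down_closed[OF L G Z aleq_trans[OF Z_GY]] by blast
qed

lemma subset_ltimes_one_lang:
  assumes dc: "is_dcat C" and L: "is_lang C L"
  shows "L \<subseteq> ltimes C L (one_lang C)"
proof
  have cat: "is_category C" using dc by (rule is_dcat_category)
  fix G assume G: "G \<in> L"
  note G_simple = track_simple[OF dc lang_track[OF L G]]
  obtain sG aG where "is_autom C G" "Start G = {sG}" and aG: "Acc G = {aG}" "aG \<in> Elts G"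
    and "src G = Over G sG" "tgt G = Over G aG"
    by (rule simple_automE[OF G_simple])
  then have U: "tgt G \<in> Ob C" using aut_ob by simp
  let ?e = "([], \<lambda>_. tgt G, \<lambda>_. undefined)"
  note e = trivial_path_in_one_lang[OF dc U, of "\<lambda>_. undefined"]
  have Ge: "tgt G = src (track C ?e)" using src_tgt_track[OF dc e(1)] by simp
  interpret gluing C G "track C ?e" aG "track_elem C ?e 0"
    using gluingI[OF cat G_simple track_simple[OF dc track_is_track[OF dc e(1)]] Ge aG(1) Start_track] .
  have "aleq C G (glue C G (track C ?e))"
    by (rule aleq_glue_trivial) (simp add: Start_track Acc_track)
  then show "G \<in> ltimes C L (one_lang C)"
    using ltimesI[OF lang_track[OF L G] G e(2) Ge] by blast
qed

lemma ltimes_one_lang: "is_dcat C \<Longrightarrow> is_lang C L \<Longrightarrow> ltimes C L (one_lang C) = L"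
  using ltimes_one_lang_subset subset_ltimes_one_lang by blast

lemma lpow_lang: "is_lang C (lpow C L n)"
  by (cases n) (simp_all add: one_lang_def ltimes_lang down_lang)

lemma lpow_one: "is_dcat C \<Longrightarrow> is_lang C L \<Longrightarrow> lpow C L 1 = L"
  by (simp add: ltimes_one_lang)

lemma lpow_add:
  assumes dc: "is_dcat C" and L: "is_lang C L"
  shows "ltimes C (lpow C L (Suc n)) (lpow C L m) = lpow C L (Suc n + m)"
proof (induction n)
  case 0
  show ?case using lpow_one[OF dc L, unfolded One_nat_def] by simp
next
  case (Suc n)
  have "ltimes C (lpow C L (Suc (Suc n))) (lpow C L m)
      = ltimes C (ltimes C L (lpow C L (Suc n))) (lpow C L m)" by simp
  also have "\<dots> = ltimes C L (ltimes C (lpow C L (Suc n)) (lpow C L m))"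
    using ltimes_assoc_subset[OF dc L lpow_lang lpow_lang] ltimes_assoc_supset[OF dc L lpow_lang lpow_lang]
    by (rule subset_antisym)
  also have "\<dots> = lpow C L (Suc (Suc n) + m)" using Suc.IH by simp
  finally show ?case .
qed

lemma lstar_plus_eq: "lstar_plus C L = (\<Union>n. lpow C L (Suc n))"
proof -
  have "{1::nat..} = range Suc" by (auto simp: image_iff Suc_le_eq gr0_conv_Suc)
  then show ?thesis unfolding lstar_plus_def by simp
qed

lemma subset_lstar_plus:
  assumes "is_dcat C" "is_lang C L"
  shows "L \<subseteq> lstar_plus C L"
proof -
  have "lpow C L (Suc 0) \<subseteq> (\<Union>n. lpow C L (Suc n))" by blast
  then show ?thesis unfolding lstar_plus_eq using lpow_one[OF assms] by simp
qed

lemma lstar_plus_ltimes_subset: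
  assumes dc: "is_dcat C" and L: "is_lang C L"
  shows "ltimes C (lstar_plus C L) (lstar_plus C L) \<subseteq> lstar_plus C L"
proof
  fix Z assume "Z \<in> ltimes C (lstar_plus C L) (lstar_plus C L)"
  then obtain G D where Z: "is_track C Z" and G: "G \<in> lstar_plus C L" and D: "D \<in> lstar_plus C L"
    and GD: "tgt G = src D" and Z_GD: "aleq C Z (glue C G D)"
    by (rule ltimesE)
  obtain n m where "G \<in> lpow C L (Suc n)" "D \<in> lpow C L (Suc m)"
    using G D unfolding lstar_plus_eq by blast
  then have "Z \<in> ltimes C (lpow C L (Suc n)) (lpow C L (Suc m))" using ltimesI[OF Z _ _ GD Z_GD] by blast
  then have "Z \<in> lpow C L (Suc (n + Suc m))" by (simp only: lpow_add[OF dc L] add_Suc)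
  then show "Z \<in> lstar_plus C L" unfolding lstar_plus_eq by blast
qed

lemma lstar_plus_least:
  assumes dc: "is_dcat C" and L: "is_lang C L" and M: "lplus L (ltimes C M M) \<subseteq> M"
  shows "lstar_plus C L \<subseteq> M"
proof -
  have L_M: "L \<subseteq> M" and MM_M: "ltimes C M M \<subseteq> M" using M by (simp_all add: lplus_def)
  have "lpow C L (Suc n) \<subseteq> M" for n
  proof (induction n)
    case 0
    show ?case using lpow_one[OF dc L, unfolded One_nat_def] L_M by simp
  next
    case (Suc n)
    have "lpow C L (Suc (Suc n)) = ltimes C L (lpow C L (Suc n))" by simp
    also have "\<dots> \<subseteq> ltimes C M M" by (rule ltimes_mono[OF L_M Suc.IH])
    finally show ?case using MM_M by blast
  qed
  then show ?thesis unfolding lstar_plus_eq by blast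
qed

lemma lang_Un:
  fixes L M :: "('o,'m) lang"
  shows "is_lang C L \<Longrightarrow> is_lang C M \<Longrightarrow> is_lang C (L \<union> M)"
  unfolding is_lang_def by blast

lemma lang_UN:
  fixes F :: "nat \<Rightarrow> ('o,'m) lang"
  shows "(\<And>n. is_lang C (F n)) \<Longrightarrow> is_lang C (\<Union>n. F n)"
  unfolding is_lang_def by blast

lemma Rat_lang: "L \<in> Rat C \<Longrightarrow> is_lang C L"
proof (induction rule: Rat.induct)
  case Rat_empty
  show ?case unfolding is_lang_def by simp
next
  case (Rat_atom G)
  show ?case by (rule down_lang)
next
  case (Rat_plus L M)
  show ?case unfolding lplus_def by (rule lang_Un[OF Rat_plus.IH])
next
  case (Rat_times L M)
  show ?case by (rule ltimes_lang)
next
  case (Rat_splus L)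
  show ?case unfolding lstar_plus_eq by (rule lang_UN[OF lpow_lang])
qed

lemma ltimes_distrib_left: "ltimes C L (lplus M N) = lplus (ltimes C L M) (ltimes C L N)"
  and ltimes_distrib_right: "ltimes C (lplus L M) N = lplus (ltimes C L N) (ltimes C M N)"
  and ltimes_empty: "ltimes C L {} = {}" "ltimes C {} L = {}"
  unfolding ltimes_def lplus_def down_def by blast+

theorem proposition10:
  fixes C :: "('o,'m) dcat"
  assumes "is_dcat C"
  shows "{} \<in> Rat C
    \<and> (\<forall>L\<in>Rat C. \<forall>M\<in>Rat C. lplus L M \<in> Rat C \<and> ltimes C L M \<in> Rat C)
    \<and> (\<forall>L\<in>Rat C. lstar_plus C L \<in> Rat C)
    \<and> (\<forall>L\<in>Rat C. \<forall>M\<in>Rat C. \<forall>N\<in>Rat C.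
          lplus (lplus L M) N = lplus L (lplus M N)
        \<and> lplus L M = lplus M L
        \<and> lplus L L = L
        \<and> lplus L {} = L \<and> lplus {} L = L
        \<and> ltimes C (ltimes C L M) N = ltimes C L (ltimes C M N)
        \<and> ltimes C L (lplus M N) = lplus (ltimes C L M) (ltimes C L N)
        \<and> ltimes C (lplus L M) N = lplus (ltimes C L N) (ltimes C M N)
        \<and> ltimes C L {} = {} \<and> ltimes C {} L = {})
    \<and> (\<forall>L\<in>Rat C. lplus L (ltimes C (lstar_plus C L) (lstar_plus C L)) \<subseteq> lstar_plus C L)
    \<and> (\<forall>L\<in>Rat C. \<forall>M\<in>Rat C. lplus L (ltimes C M M) \<subseteq> M \<longrightarrow> lstar_plus C L \<subseteq> M)"
proof (intro conjI ballI impI)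
  fix L M N assume L: "L \<in> Rat C" and M: "M \<in> Rat C" and N: "N \<in> Rat C"
  show "ltimes C (ltimes C L M) N = ltimes C L (ltimes C M N)"
    using Rat_lang[OF L] Rat_lang[OF M] Rat_lang[OF N]
    by (intro subset_antisym ltimes_assoc_subset[OF assms] ltimes_assoc_supset[OF assms])
next
  fix L M assume L: "L \<in> Rat C" and "M \<in> Rat C" "lplus L (ltimes C M M) \<subseteq> M"
  then show "lstar_plus C L \<subseteq> M" using lstar_plus_least[OF assms Rat_lang[OF L]] by blast
next
  fix L assume "L \<in> Rat C"
  then have L: "is_lang C L" by (rule Rat_lang)
  show "lplus L (ltimes C (lstar_plus C L) (lstar_plus C L)) \<subseteq> lstar_plus C L"
    using subset_lstar_plus[OF assms L] lstar_plus_ltimes_subset[OF assms L] by (simp add: lplus_def)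
qed (simp_all add: Rat.intros ltimes_distrib_left ltimes_distrib_right ltimes_empty,
     simp_all add: lplus_def Un_ac)

end
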